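(* Let $k,l,m$ be positive integers, $n=(l+1)k$, and let $A\in\mathbb{R}^{m\times n}$ have $2k$-restricted isometry constant $\delta_{2k}\in[\frac{\sqrt{2}}{2},1)$. Let $x\in\mathbb{R}^n$, $\epsilon\ge 0$, $e\in\mathbb{R}^m$ with $\|e\|_2\le\epsilon$, and $y=Ax+e$. For $p\in(0,1)$ let $x^{\star}$ be a solution of $$\min_{\gamma\in\mathbb{R}^n}\|\gamma\|_p\quad\text{subject to}\quad \|y-A\gamma\|_2\le\epsilon .$$ Let $T_0=\{1,\dots,k\}$ and $T_0^c=\{k+1,\dots,n\}$. Then for each $p\in(0,1)$ such that $C(p)<1$, where $$C(p)=\begin{cases}\left(\dfrac{\big((2-\delta_{2k})^{1-\frac{2}{p}}+2\delta_{2k}\big)g(p)}{1-\delta_{2k}}\right)^{p/2}, & p\in(0,p^{\star}],\\[2ex] \left(\dfrac{(2-\delta_{2k})^{1-\frac{2}{p}}g(p)+2^{2-\frac{2}{p}}\delta_{2k}}{1-\delta_{2k}}\right)^{p/2}, & p\in(p^{\star},1),\end{cases}$$ the solution $x^{\star}$ obeys $$\|x-x^{\star}\|_p^p\le C_0\|x_{T_0^c}\|_p^p+C_1k^{1-\frac{p}{2}}\epsilon^p,\qquad C_0=\frac{2(1+C(p))}{1-C(p)},\quad C_1=\frac{2^{\frac{3p}{2}+1}}{(1-\delta_{2k})^{\frac{p}{2}}(1-C(p))}.$$ In particular, if $\epsilon=0$ and $x$ is $k$-sparse, then $x^{\star}=x$.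
   Context: For $1\le s\le n$, the $s$-restricted isometry constant $\delta_s$ of $A$ is the smallest constant such that $(1-\delta_s)\|z\|_2^2\le\|Az\|_2^2\le(1+\delta_s)\|z\|_2^2$ for all $s$-sparse $z\in\mathbb{R}^n$ (i.e. with at most $s$ nonzero entries). For $p\in(0,1)$, $\|\gamma\|_p=(\sum_i|\gamma_i|^p)^{1/p}$. For a vector $v$ and index set $T$, $v_T$ denotes the vector equal to $v$ on $T$ and zero elsewhere. $g(p)=\frac{p}{2}(1-\frac{p}{2})^{\frac{2}{p}-1}$ for $p\in(0,1]$. $p^{\star}\approx 0.45418$ is the unique solution in $(0,1]$ of $f(p)=1$, where $f(p)=(\frac{p}{2})^{1/2}(2-p)^{\frac1p-\frac12}$. *)

theory Defs
  imports Complex_Main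
begin

text \<open>Vectors in R^n are represented as functions nat => real, only indices 0..n-1
  are relevant (index j corresponds to the paper's index j+1).\<close>

definition matvec :: "(nat \<Rightarrow> nat \<Rightarrow> real) \<Rightarrow> nat \<Rightarrow> (nat \<Rightarrow> real) \<Rightarrow> nat \<Rightarrow> real" where
  "matvec A n z = (\<lambda>i. \<Sum>j<n. A i j * z j)"

definition sqnorm :: "nat \<Rightarrow> (nat \<Rightarrow> real) \<Rightarrow> real" where
  "sqnorm n z = (\<Sum>j<n. (z j)\<^sup>2)"

definition norm2 :: "nat \<Rightarrow> (nat \<Rightarrow> real) \<Rightarrow> real" where
  "norm2 n z = sqrt (sqnorm n z)"

definition pnorm_pow :: "real \<Rightarrow> nat \<Rightarrow> (nat \<Rightarrow> real) \<Rightarrow> real" where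
  "pnorm_pow p n z = (\<Sum>j<n. \<bar>z j\<bar> powr p)"

definition pnorm :: "real \<Rightarrow> nat \<Rightarrow> (nat \<Rightarrow> real) \<Rightarrow> real" where
  "pnorm p n z = (pnorm_pow p n z) powr (1 / p)"

definition sparse :: "nat \<Rightarrow> nat \<Rightarrow> (nat \<Rightarrow> real) \<Rightarrow> bool" where
  "sparse s n z \<longleftrightarrow> card {j. j < n \<and> z j \<noteq> 0} \<le> s"

definition ric :: "(nat \<Rightarrow> nat \<Rightarrow> real) \<Rightarrow> nat \<Rightarrow> nat \<Rightarrow> nat \<Rightarrow> real" where
  "ric A m n s = Inf {d. \<forall>z. sparse s n z \<longrightarrow>
      (1 - d) * sqnorm n z \<le> sqnorm m (matvec A n z) \<and>
      sqnorm m (matvec A n z) \<le> (1 + d) * sqnorm n z}"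

definition g :: "real \<Rightarrow> real" where
  "g p = (p / 2) * (1 - p / 2) powr (2 / p - 1)"

definition f :: "real \<Rightarrow> real" where
  "f p = (p / 2) powr (1 / 2) * (2 - p) powr (1 / p - 1 / 2)"

definition pstar :: real where
  "pstar = (THE p. 0 < p \<and> p \<le> 1 \<and> f p = 1)"

definition Cp :: "real \<Rightarrow> real \<Rightarrow> real" where
  "Cp d p = (if p \<le> pstar
     then (((2 - d) powr (1 - 2 / p) + 2 * d) * g p / (1 - d)) powr (p / 2)
     else (((2 - d) powr (1 - 2 / p) * g p + 2 powr (2 - 2 / p) * d) / (1 - d)) powr (p / 2))"

end

theory Submission
  imports Defs "HOL-Analysis.Convex" "HOL-Analysis.L2_Norm"
begin

text \<open>Write h = x - x* and let T be a set of k indices. Minimality of x* and the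
  p-triangle inequality give the cone constraint
  ||h_{T^c}||_p^p \<le> ||h_T||_p^p + 2 ||x_{T^c}||_p^p.
  Sort T^c by decreasing |h| and cut it into blocks T_1, ..., T_l of size k. The RIP applied
  to h on T \<union> T_1, together with the near-orthogonality of A on disjoint blocks, bounds
  ||h_T||_2^2 through ||A h||_2 \<le> 2 \<epsilon> and the tail blocks. As the blocks decrease, ||h_{T_j}||_2
  is controlled by the l_p-masses of T_{j-1} and T_j; maximising the resulting two-variable
  expressions yields the constant M(p)^2 = max (2 g(p)) (2^(2 - 2/p)), which equals 2 g(p)
  exactly when p \<le> p*. The power-mean inequality turns all this into the robust null space
  property ||h_T||_p^p \<le> C(p) ||h_{T^c}||_p^p + D, and with the cone constraint the error
  bound follows. For k-sparse x and \<epsilon> = 0 one takes T \<supseteq> supp x.\<close>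

section \<open>Elementary inequalities for real powers\<close>

lemma powr_times_self: "0 \<le> v \<Longrightarrow> v powr a * v = v powr (a + 1)" for v a :: real
  using powr_mult_base[of v a] by (simp add: mult.commute add.commute)

lemma powr_squared: "(x powr a)\<^sup>2 = x powr (2 * a)" for x a :: real
  by (simp add: power2_eq_square powr_add[symmetric])

lemma powr_diff_eq_inverse: "x powr (a - b) = 1 / x powr (b - a)" for x a b :: real
  by (simp add: powr_minus_divide[symmetric])

lemma sqrt_powr: "0 \<le> x \<Longrightarrow> sqrt x powr p = x powr (p / 2)" for x p :: real
  by (simp add: powr_half_sqrt[symmetric] powr_powr)

lemma abs_powr_eq_sq_powr: "\<bar>z\<bar> powr p = (z\<^sup>2) powr (p / 2)" for z p :: real
proof -
  have "z\<^sup>2 = \<bar>z\<bar> powr 2" by simp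
  then have "(z\<^sup>2) powr (p / 2) = \<bar>z\<bar> powr (2 * (p / 2))" by (simp only: powr_powr)
  then show ?thesis by simp
qed

lemma powr_add_le:
  fixes a b p :: real
  assumes "0 < p" "p \<le> 1" "0 \<le> a" "0 \<le> b"
  shows "(a + b) powr p \<le> a powr p + b powr p"
proof (cases "a + b = 0")
  case True
  then show ?thesis using assms by auto
next
  case False
  then have ab: "a + b > 0" using assms by auto
  have weighted: "z * (a + b) powr (p - 1) \<le> z powr p" if "0 \<le> z" "z \<le> a + b" for z
  proof (cases "z = 0")
    case False
    then have z: "z > 0" using that by auto
    have "(a + b) powr (p - 1) \<le> z powr (p - 1)"
      using z that assms by (intro powr_mono2') auto
    then have "z * (a + b) powr (p - 1) \<le> z * z powr (p - 1)"
      using z by (intro mult_left_mono) auto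
    also have "\<dots> = z powr p" using z by (simp add: powr_mult_base)
    finally show ?thesis .
  qed simp
  have "(a + b) powr p = (a + b) * (a + b) powr (p - 1)"
    using ab by (simp add: powr_mult_base)
  also have "\<dots> = a * (a + b) powr (p - 1) + b * (a + b) powr (p - 1)"
    by (simp add: algebra_simps)
  also have "\<dots> \<le> a powr p + b powr p"
    using weighted[of a] weighted[of b] assms by (intro add_mono) auto
  finally show ?thesis .
qed

lemma abs_add_powr_le:
  fixes a b p :: real
  assumes "0 < p" "p \<le> 1"
  shows "\<bar>a + b\<bar> powr p \<le> \<bar>a\<bar> powr p + \<bar>b\<bar> powr p"
proof -
  have "\<bar>a + b\<bar> powr p \<le> (\<bar>a\<bar> + \<bar>b\<bar>) powr p"
    using assms by (intro powr_mono2) auto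
  also have "\<dots> \<le> \<bar>a\<bar> powr p + \<bar>b\<bar> powr p"
    using assms by (intro powr_add_le) auto
  finally show ?thesis .
qed

lemma powr_le_tangent:
  fixes u m \<gamma> :: real
  assumes "0 < \<gamma>" "\<gamma> \<le> 1" "0 < m" "0 \<le> u"
  shows "u powr \<gamma> \<le> m powr \<gamma> * (\<gamma> * (u / m) + (1 - \<gamma>))"
proof (cases "u = 0")
  case False
  then have u: "u > 0" using assms by auto
  have "(u / m) powr \<gamma> * 1 powr (1 - \<gamma>) \<le> \<gamma> * (u / m) + (1 - \<gamma>) * 1"
    using assms u by (intro Youngs_inequality_0) auto
  then have "u powr \<gamma> / m powr \<gamma> \<le> \<gamma> * (u / m) + (1 - \<gamma>)"
    using u assms by (simp add: powr_divide)
  then show ?thesis using assms by (simp add: field_simps)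
qed (use assms in simp)

lemma Bernoulli_inequality_powr:
  fixes c t :: real
  assumes "1 \<le> c" "0 \<le> t"
  shows "1 + c * t \<le> (1 + t) powr c"
proof -
  define X where "X = (1 + t) powr c"
  have X: "X > 0" using assms by (simp add: X_def)
  have "X powr (1 / c) * 1 powr (1 - 1 / c) \<le> (1 / c) * X + (1 - 1 / c) * 1"
    using assms X by (intro Youngs_inequality_0) auto
  moreover have "X powr (1 / c) = 1 + t"
    using assms by (simp add: X_def powr_powr)
  ultimately have "1 + t \<le> X / c + (1 - 1 / c)" by simp
  then have "c * (1 + t) \<le> c * (X / c + (1 - 1 / c))"
    using assms by (intro mult_left_mono) auto
  also have "\<dots> = X + c - 1" using assms by (simp add: field_simps)
  finally show ?thesis unfolding X_def by (simp add: algebra_simps)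
qed

lemma sum_abs_powr_le_power_mean:
  fixes z :: "'a \<Rightarrow> real" and p :: real
  assumes "finite S" "card S = k" "k > 0" "0 < p" "p \<le> 2"
  shows "(\<Sum>j\<in>S. \<bar>z j\<bar> powr p) \<le> real k powr (1 - p / 2) * (\<Sum>j\<in>S. (z j)\<^sup>2) powr (p / 2)"
proof -
  define U where "U = (\<Sum>j\<in>S. (z j)\<^sup>2)"
  define \<gamma> where "\<gamma> = p / 2"
  have \<gamma>: "0 < \<gamma>" "\<gamma> \<le> 1" using assms by (auto simp: \<gamma>_def)
  show ?thesis
  proof (cases "U = 0")
    case True
    then have "\<forall>j\<in>S. z j = 0" using assms(1) unfolding U_def
      by (simp add: sum_nonneg_eq_0_iff)
    then show ?thesis using assms by simp
  next
    case False
    have U: "U > 0" using False unfolding U_def by (metis less_eq_real_def sum_nonneg zero_le_power2)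
    define m where "m = U / k"
    have m: "m > 0" using U assms by (simp add: m_def)
    have "(\<Sum>j\<in>S. \<bar>z j\<bar> powr p) = (\<Sum>j\<in>S. ((z j)\<^sup>2) powr \<gamma>)"
      by (simp add: abs_powr_eq_sq_powr \<gamma>_def)
    also have "\<dots> \<le> (\<Sum>j\<in>S. m powr \<gamma> * (\<gamma> * ((z j)\<^sup>2 / m) + (1 - \<gamma>)))"
      using \<gamma> m by (intro sum_mono powr_le_tangent) auto
    also have "\<dots> = (\<Sum>j\<in>S. (m powr \<gamma> * \<gamma> / m) * (z j)\<^sup>2 + m powr \<gamma> * (1 - \<gamma>))"
      by (intro sum.cong) (auto simp: field_simps)
    also have "\<dots> = (m powr \<gamma> * \<gamma> / m) * U + k * (m powr \<gamma> * (1 - \<gamma>))"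
      unfolding sum.distrib sum_distrib_left[symmetric] U_def using assms by simp
    also have "\<dots> = m powr \<gamma> * k"
      using assms m by (simp add: m_def field_simps)
    also have "\<dots> = real k powr (1 - \<gamma>) * U powr \<gamma>"
      using assms U by (simp add: m_def powr_divide powr_diff field_simps)
    finally show ?thesis by (simp add: U_def \<gamma>_def)
  qed
qed

section \<open>The constants g, p* and M(p)\<close>

lemma mult_powr_le_g:
  fixes p t :: real
  assumes "0 < p" "p < 1" "0 \<le> t" "t \<le> 1"
  shows "t * (1 - t) powr (2 / p - 1) \<le> g p"
proof -
  define a where "a = 2 / p - 1"
  define t0 where "t0 = p / 2"
  have a1: "a > 1" using assms by (simp add: a_def field_simps)
  have t0: "0 < t0" "t0 < 1" using assms by (auto simp: t0_def)
  have gdef: "g p = t0 * (1 - t0) powr a" by (simp add: g_def a_def t0_def)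
  show ?thesis
  proof (cases "t = 0 \<or> t = 1")
    case True
    then show ?thesis using t0 a1 by (auto simp: gdef a_def[symmetric])
  next
    case False
    then have t: "0 < t" "t < 1" using assms by auto
    text \<open>Weighted Gibbs inequality: \<open>ln u \<le> u - 1\<close> at \<open>t/t0\<close> and \<open>(1-t)/(1-t0)\<close>, whose
      weighted deviations cancel because \<open>t0\<close> is the critical point.\<close>
    have l1: "ln (t / t0) \<le> t / t0 - 1" using t t0 by (intro ln_le_minus_one) auto
    have l2: "ln ((1 - t) / (1 - t0)) \<le> (1 - t) / (1 - t0) - 1" using t t0 by (intro ln_le_minus_one) auto
    have rel: "t / t0 - 1 + a * ((1 - t) / (1 - t0) - 1) = 0"
      using assms unfolding a_def t0_def by (simp add: field_simps)
    have "ln t - ln t0 + a * (ln (1 - t) - ln (1 - t0)) = ln (t / t0) + a * ln ((1 - t) / (1 - t0))"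
      using t t0 by (simp add: ln_div)
    also have "\<dots> \<le> t / t0 - 1 + a * ((1 - t) / (1 - t0) - 1)"
      using l1 l2 a1 by (intro add_mono mult_left_mono) auto
    finally have "ln (t * (1 - t) powr a) \<le> ln (t0 * (1 - t0) powr a)"
      using t t0 rel by (simp add: ln_mult ln_powr algebra_simps)
    then have "t * (1 - t) powr a \<le> t0 * (1 - t0) powr a"
      using t t0 by (subst (asm) ln_le_cancel_iff) auto
    then show ?thesis by (simp add: gdef a_def)
  qed
qed

lemma g_nonneg: "0 < p \<Longrightarrow> 0 \<le> g p"
  by (simp add: g_def)

definition ln_f :: "real \<Rightarrow> real" where
  "ln_f p = ln (p / 2) / 2 + (1 / p - 1 / 2) * ln (2 - p)"

lemma f_eq_exp_ln_f: "0 < p \<Longrightarrow> p < 2 \<Longrightarrow> f p = exp (ln_f p)"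
  unfolding f_def ln_f_def powr_def by (simp add: exp_add[symmetric] algebra_simps)

lemma ln_f_has_derivative:
  assumes "0 < p" "p < 2"
  shows "(ln_f has_real_derivative (- ln (2 - p) / p\<^sup>2)) (at p)"
proof -
  have d1: "((\<lambda>p. ln (p / 2) / 2) has_real_derivative (1 / (2 * p))) (at p)"
    using assms by (auto intro!: derivative_eq_intros simp: field_simps)
  have d2: "((\<lambda>p. 1 / p - 1 / 2) has_real_derivative (- 1 / p\<^sup>2)) (at p)"
    using assms by (auto intro!: derivative_eq_intros simp: field_simps power2_eq_square)
  have d3: "((\<lambda>p. ln (2 - p)) has_real_derivative (- 1 / (2 - p))) (at p)"
    using assms by (auto intro!: derivative_eq_intros simp: field_simps)
  have "(ln_f has_real_derivative
      (1 / (2 * p) + ((1 / p - 1 / 2) * (- 1 / (2 - p)) + (- 1 / p\<^sup>2) * ln (2 - p)))) (at p)"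
    unfolding ln_f_def[abs_def] by (intro DERIV_add d1 DERIV_mult' d2 d3)
  moreover have "(1 / p - 1 / 2) * (- 1 / (2 - p)) = - (1 / (2 * p))"
    using assms by (simp add: field_simps)
  ultimately show ?thesis by simp
qed

lemma continuous_on_ln_f: "0 < a \<Longrightarrow> b < 2 \<Longrightarrow> continuous_on {a..b} ln_f"
  by (intro continuous_at_imp_continuous_on ballI DERIV_isCont[OF ln_f_has_derivative]) auto

lemma ln_f_strict_decreasing:
  assumes "0 < a" "a < b" "b \<le> 1"
  shows "ln_f b < ln_f a"
proof (rule DERIV_neg_imp_decreasing_open[OF assms(2)])
  fix x assume x: "a < x" "x < b"
  have "ln (2 - x) > 0" using x assms by simp
  then have "- ln (2 - x) / x\<^sup>2 < 0" using x assms by (simp add: divide_neg_pos)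
  then show "\<exists>y. (ln_f has_real_derivative y) (at x) \<and> y < 0"
    using ln_f_has_derivative[of x] x assms by auto
qed (use assms in \<open>intro continuous_on_ln_f; auto\<close>)

lemma ln_f_two_fifths_pos: "ln_f (2/5) > 0"
proof -
  have "ln 5 < ln ((8/5::real)^4)"
    by (simp add: power_divide)
  then have "ln 5 < 4 * ln (8/5::real)" by (simp add: ln_realpow)
  then show ?thesis by (simp add: ln_f_def ln_div)
qed

lemma ln_f_one_neg: "ln_f 1 < 0"
  by (simp add: ln_f_def)

lemma pstar_bounds_and_root: "2/5 < pstar" "pstar < 1" "ln_f pstar = 0"
proof -
  obtain p0 where p0: "2/5 \<le> p0" "p0 \<le> 1" "ln_f p0 = 0"
    using IVT2'[of ln_f 1 0 "2/5"] ln_f_one_neg ln_f_two_fifths_pos continuous_on_ln_f[of "2/5" 1]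
    by force
  have unique: "q = p0" if "0 < q" "q \<le> 1" "ln_f q = 0" for q
    using ln_f_strict_decreasing[of q p0] ln_f_strict_decreasing[of p0 q] that p0
    by (cases q p0 rule: linorder_cases) auto
  have "pstar = p0"
    unfolding pstar_def
  proof (rule the_equality)
    show "0 < p0 \<and> p0 \<le> 1 \<and> f p0 = 1" using p0 f_eq_exp_ln_f[of p0] by auto
  next
    fix q assume "0 < q \<and> q \<le> 1 \<and> f q = 1"
    then show "q = p0" using unique f_eq_exp_ln_f[of q] by auto
  qed
  then show "ln_f pstar = 0" using p0 by simp
  show "2/5 < pstar" using \<open>pstar = p0\<close> p0 ln_f_two_fifths_pos by (cases "p0 = 2/5") auto
  show "pstar < 1" using \<open>pstar = p0\<close> p0 ln_f_one_neg by (cases "p0 = 1") auto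
qed

lemma g_eq_exp_ln_f:
  assumes "0 < p" "p < 1"
  shows "g p = exp (2 * ln_f p) * 2 powr (1 - 2 / p)"
proof -
  have "exp (2 * ln_f p) = (p / 2) * (2 - p) powr (2 / p - 1)"
  proof -
    have "2 * ln_f p = ln (p / 2) + (2 / p - 1) * ln (2 - p)"
      by (simp add: ln_f_def algebra_simps)
    then show ?thesis using assms by (simp add: exp_add powr_def)
  qed
  moreover have "(1 - p / 2) powr (2 / p - 1) = (2 - p) powr (2 / p - 1) * 2 powr (1 - 2 / p)"
  proof -
    have "(1 - p / 2) = (2 - p) / 2" by simp
    then have "(1 - p / 2) powr (2 / p - 1) = (2 - p) powr (2 / p - 1) / 2 powr (2 / p - 1)"
      by (simp only: powr_divide)
    also have "\<dots> = (2 - p) powr (2 / p - 1) * 2 powr (- (2 / p - 1))"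
      by (simp only: powr_minus divide_inverse)
    also have "- (2 / p - 1) = 1 - 2 / p" by simp
    finally show ?thesis .
  qed
  ultimately show ?thesis by (simp add: g_def)
qed

lemma g_ge_iff_le_pstar:
  assumes "0 < p" "p < 1"
  shows "2 powr (1 - 2 / p) \<le> g p \<longleftrightarrow> p \<le> pstar"
proof -
  have "ln_f p \<ge> 0 \<longleftrightarrow> p \<le> pstar"
    using ln_f_strict_decreasing[of p pstar] ln_f_strict_decreasing[of pstar p] assms
      pstar_bounds_and_root by (cases p pstar rule: linorder_cases) auto
  then show ?thesis
    using g_eq_exp_ln_f[OF assms] by simp
qed

definition tail_const_sq :: "real \<Rightarrow> real" where
  "tail_const_sq p = (if p \<le> pstar then 2 * g p else 2 powr (2 - 2 / p))"

lemma two_powr_two_minus: "(2::real) powr (2 - 2 / p) = 2 * 2 powr (1 - 2 / p)"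
  using powr_add[of 2 1 "1 - 2 / p"] by simp

lemma tail_const_sq_eq_max:
  "0 < p \<Longrightarrow> p < 1 \<Longrightarrow> tail_const_sq p = max (2 * g p) (2 powr (2 - 2 / p))"
  using g_ge_iff_le_pstar[of p] by (auto simp: tail_const_sq_def two_powr_two_minus)

lemma Cp_eq_tail_const_sq:
  "Cp d p = (((2 - d) powr (1 - 2 / p) * g p + d * tail_const_sq p) / (1 - d)) powr (p / 2)"
  by (simp add: Cp_def tail_const_sq_def algebra_simps)

section \<open>A two-block extremal problem\<close>

definition tail_const :: "real \<Rightarrow> real" where
  "tail_const p = sqrt (tail_const_sq p)"

lemma tail_const_sq_nonneg: "0 < p \<Longrightarrow> p < 1 \<Longrightarrow> 0 \<le> tail_const_sq p"
  by (simp add: tail_const_sq_eq_max le_max_iff_disj)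

lemma sqrt_two_g_le_tail_const: "0 < p \<Longrightarrow> p < 1 \<Longrightarrow> sqrt (2 * g p) \<le> tail_const p"
  by (simp add: tail_const_def tail_const_sq_eq_max)

lemma two_powr_le_tail_const: "0 < p \<Longrightarrow> p < 1 \<Longrightarrow> 2 powr (1 - 1 / p) \<le> tail_const p"
proof -
  assume p: "0 < p" "p < 1"
  have "(2 powr (1 - 1 / p))\<^sup>2 = (2::real) powr (2 - 2 / p)"
    by (simp add: powr_squared algebra_simps)
  then have "(2 powr (1 - 1 / p))\<^sup>2 \<le> tail_const_sq p"
    by (simp add: tail_const_sq_eq_max[OF p])
  then show ?thesis unfolding tail_const_def by (rule real_le_rsqrt)
qed

lemma tail_const_nonneg: "0 < p \<Longrightarrow> p < 1 \<Longrightarrow> 0 \<le> tail_const p"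
  by (simp add: tail_const_def tail_const_sq_nonneg)

text \<open>The value of the two-block expression of \<open>mixed_powr_bound_unit\<close> below at its
  extremal configuration \<open>x = 1 - s\<close>, \<open>y = s\<close>.\<close>

definition phi :: "real \<Rightarrow> real \<Rightarrow> real" where
  "phi p s = (1 - s) powr (1/p - 1/2) * s powr (1/2) + s powr (1/p)"

lemma phi_eq:
  assumes "0 \<le> s"
  shows "phi p s = s powr (1/2) * ((1 - s) powr (1/p - 1/2) + s powr (1/p - 1/2))"
proof (cases "s = 0")
  case False
  then have "s powr (1/p) = s powr (1/2) * s powr (1/p - 1/2)" by (simp flip: powr_add)
  then show ?thesis by (simp add: phi_def distrib_left mult.commute)
qed (simp add: phi_def)

lemma phi_le_sqrt_two_g:
  fixes p s :: real
  assumes "0 < p" "p \<le> 2/5" "0 \<le> s" "s \<le> 1/2"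
  shows "phi p s \<le> sqrt (2 * g p)"
proof -
  define c where "c = 1/p - 1/2"
  have c2: "c \<ge> 2" using assms by (simp add: c_def field_simps)
  define u where "u = 1 - s"
  have u: "u \<ge> 1/2" "u > 0" "s \<le> u" using assms by (auto simp: u_def)
  have sum_le: "u powr c + s powr c \<le> (1 - s/2) powr c"
  proof (cases "s = 0")
    case True then show ?thesis by (simp add: u_def)
  next
    case False
    then have s: "s > 0" using assms by auto
    define t where "t = s / (2 * u)"
    have t: "t \<ge> 0" using s u by (simp add: t_def)
    have e: "1 - s/2 = u * (1 + t)" using u by (simp add: t_def u_def field_simps)
    have "u powr c * (1 + c * t) \<le> u powr c * (1 + t) powr c"
      using Bernoulli_inequality_powr[of c t] c2 t by (intro mult_left_mono) auto
    also have "\<dots> = (1 - s/2) powr c"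
      using u t by (simp add: e powr_mult)
    finally have A: "u powr c * (1 + c * t) \<le> (1 - s/2) powr c" .
    have "u powr c * (1 + c * t) = u powr c + (c/2) * (u powr (c - 1) * s)"
      using u by (simp add: t_def powr_diff field_simps)
    moreover have "s powr c \<le> (c/2) * (u powr (c - 1) * s)"
    proof -
      have "s powr c = s powr (c - 1) * s"
        using powr_times_self[of s "c - 1"] s by simp
      also have "\<dots> \<le> u powr (c - 1) * s"
        using s u c2 by (intro mult_right_mono powr_mono2) auto
      also have "\<dots> \<le> (c/2) * (u powr (c - 1) * s)"
        using c2 s mult_right_mono[of 1 "c/2" "u powr (c - 1) * s"] by simp
      finally show ?thesis .
    qed
    ultimately show ?thesis using A by linarith
  qed
  have "phi p s \<le> s powr (1/2) * (1 - s/2) powr c"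
    using phi_eq[of s p] sum_le assms by (auto simp: u_def c_def intro!: mult_left_mono)
  also have "\<dots> \<le> sqrt (2 * g p)"
  proof (rule real_le_rsqrt)
    have e1: "(s powr (1/2))\<^sup>2 = s" using assms by (simp add: powr_half_sqrt)
    have e2: "((1 - s/2) powr c)\<^sup>2 = (1 - s/2) powr (2/p - 1)"
      by (simp add: powr_squared c_def algebra_simps)
    have "(s powr (1/2) * (1 - s/2) powr c)\<^sup>2 = 2 * ((s/2) * (1 - s/2) powr (2/p - 1))"
      by (simp add: power_mult_distrib e1 e2)
    also have "\<dots> \<le> 2 * g p" using mult_powr_le_g[of p "s/2"] assms by auto
    finally show "(s powr (1/2) * (1 - s/2) powr c)\<^sup>2 \<le> 2 * g p" .
  qed
  finally show ?thesis .
qed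

lemma phi_le_two_powr:
  fixes p s :: real
  assumes "2/5 \<le> p" "p < 1" "0 \<le> s" "s \<le> 1/2"
  shows "phi p s \<le> 2 powr (1 - 1/p)"
proof -
  define c where "c = 1/p - 1/2"
  have p0: "p > 0" using assms by simp
  have c2: "c \<le> 2" "c > 1/2" using assms p0 by (auto simp: c_def field_simps)
  define \<gamma> where "\<gamma> = c / 2"
  have \<gamma>: "0 < \<gamma>" "\<gamma> \<le> 1" using c2 by (auto simp: \<gamma>_def)
  define u where "u = 1 - s"
  have u: "u \<ge> 1/2" using assms by (simp add: u_def)
  define m where "m = (u\<^sup>2 + s\<^sup>2) / 2"
  have m: "m > 0" using u by (simp add: m_def add_pos_nonneg)
  have sq_powr: "z powr c = (z\<^sup>2) powr \<gamma>" if "0 \<le> z" for z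
    using that by (simp add: powr_powr \<gamma>_def flip: powr_numeral)
  text \<open>Concavity of \<open>z \<mapsto> z powr \<gamma>\<close> at the mean \<open>m\<close> of \<open>u\<^sup>2\<close> and \<open>s\<^sup>2\<close>.\<close>
  have "u powr c + s powr c \<le> m powr \<gamma> * (\<gamma> * (u\<^sup>2 / m) + (1 - \<gamma>)) + m powr \<gamma> * (\<gamma> * (s\<^sup>2 / m) + (1 - \<gamma>))"
    using sq_powr[of u] sq_powr[of s] u assms powr_le_tangent[OF \<gamma> m, of "u\<^sup>2"]
      powr_le_tangent[OF \<gamma> m, of "s\<^sup>2"] by simp
  also have "\<dots> = m powr \<gamma> * (\<gamma> * ((u\<^sup>2 + s\<^sup>2) / m) + 2 * (1 - \<gamma>))"
    by (simp add: algebra_simps add_divide_distrib)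
  also have "u\<^sup>2 + s\<^sup>2 = 2 * m" by (simp add: m_def)
  also have "2 * m / m = 2" using m by simp
  finally have sum2: "u powr c + s powr c \<le> 2 * m powr \<gamma>"
    by (simp add: algebra_simps)
  have A: "phi p s \<le> 2 * s powr (1/2) * m powr \<gamma>"
    using phi_eq[of s p] mult_left_mono[OF sum2, of "s powr (1/2)"] assms
    by (simp add: u_def c_def algebra_simps)
  define d where "d = 1 - 2 * s"
  have d: "0 \<le> d" "d \<le> 1" using assms by (auto simp: d_def)
  have md: "m = (1 + d\<^sup>2) / 4" by (simp add: m_def d_def u_def power2_eq_square field_simps)
  have B: "2 * s * (1 + d\<^sup>2) powr c \<le> 1"
  proof -
    have "(1 + d\<^sup>2) powr c \<le> (1 + d\<^sup>2)\<^sup>2"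
      using c2 powr_mono[of c 2 "1 + d\<^sup>2"] by simp
    then have "2 * s * (1 + d\<^sup>2) powr c \<le> (1 - d) * (1 + d\<^sup>2)\<^sup>2"
      using assms mult_left_mono by (fastforce simp: d_def)
    also have "\<dots> = 1 - d * ((1 - d)\<^sup>2 + d\<^sup>2 * (1 - d + d\<^sup>2))"
      by (simp add: power2_eq_square algebra_simps)
    also have "\<dots> \<le> 1"
      using d by (simp add: power2_eq_square)
    finally show ?thesis .
  qed
  have "(2 * s powr (1/2) * m powr \<gamma>)\<^sup>2 = 2 * (2 * s * (1 + d\<^sup>2) powr c) / 2 powr (2 * c)"
  proof -
    have e1: "(s powr (1/2))\<^sup>2 = s" using assms by (simp add: powr_half_sqrt)
    have "(m powr \<gamma>)\<^sup>2 = m powr c" by (simp add: powr_squared \<gamma>_def)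
    then have e2: "(m powr \<gamma>)\<^sup>2 = (1 + d\<^sup>2) powr c / 4 powr c"
      by (simp add: md powr_divide)
    have e3: "(4::real) powr c = 2 powr (2 * c)"
      using powr_powr[of 2 2 c] by simp
    show ?thesis by (simp add: power_mult_distrib e1 e2 e3)
  qed
  also have "\<dots> \<le> 2 / 2 powr (2 * c)"
    using B by (intro divide_right_mono) auto
  also have "\<dots> = (2 powr (1 - 1/p))\<^sup>2"
  proof -
    have "2 / 2 powr (2 * c) = (2::real) powr (1 - 2 * c)"
      by (simp add: powr_diff)
    also have "1 - 2 * c = 2 * (1 - 1/p)" by (simp add: c_def algebra_simps)
    finally show ?thesis by (simp add: powr_squared)
  qed
  finally have "2 * s powr (1/2) * m powr \<gamma> \<le> 2 powr (1 - 1/p)"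
    by (rule power2_le_imp_le) simp
  with A show ?thesis by linarith
qed

lemma phi_le_tail_const:
  assumes "0 < p" "p < 1" "0 \<le> s" "s \<le> 1/2"
  shows "phi p s \<le> tail_const p"
  using phi_le_sqrt_two_g[of p s] phi_le_two_powr[of p s] assms
    sqrt_two_g_le_tail_const[of p] two_powr_le_tail_const[of p]
  by (cases "p \<le> 2/5") auto

lemma mixed_powr_bound_unit:
  fixes p x y :: real
  assumes p: "0 < p" "p < 1" and xy: "0 \<le> y" "y \<le> x" "x + y \<le> 1"
  shows "x powr (1/p - 1/2) * y powr (1/2) + y powr (1/p - 1) * (1 - x) \<le> tail_const p"
proof -
  have e0: "1/p - 1 \<ge> 0" using p by (simp add: field_simps)
  show ?thesis
  proof (cases "x \<le> 1/2")
    case True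
    have "x powr (1/p - 1/2) * y powr (1/2) + y powr (1/p - 1) * (1 - x)
        \<le> x powr (1/p - 1/2) * x powr (1/2) + x powr (1/p - 1) * (1 - x)"
      using xy True e0 by (intro add_mono mult_left_mono mult_right_mono powr_mono2) auto
    also have "x powr (1/p - 1/2) * x powr (1/2) = x powr (1/p - 1) * x"
      using powr_times_self[of x "1/p - 1"] xy by (simp flip: powr_add)
    also have "x powr (1/p - 1) * x + x powr (1/p - 1) * (1 - x) = x powr (1/p - 1)"
      by (simp add: algebra_simps)
    also have "\<dots> \<le> (1/2) powr (1/p - 1)"
      using xy True e0 by (intro powr_mono2) auto
    also have "(1/2::real) powr (1/p - 1) = 2 powr (1 - 1/p)"
      by (simp add: powr_divide powr_minus_divide[symmetric])
    also have "\<dots> \<le> tail_const p" using two_powr_le_tail_const p by simp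
    finally show ?thesis .
  next
    case False
    define s where "s = 1 - x"
    have s: "0 \<le> s" "s \<le> 1/2" "y \<le> s" using False xy by (auto simp: s_def)
    have "x powr (1/p - 1/2) * y powr (1/2) \<le> x powr (1/p - 1/2) * s powr (1/2)"
      using s xy by (intro mult_left_mono powr_mono2) auto
    moreover have "y powr (1/p - 1) * s \<le> s powr (1/p - 1) * s"
      using s xy e0 by (intro mult_right_mono powr_mono2) auto
    ultimately have "x powr (1/p - 1/2) * y powr (1/2) + y powr (1/p - 1) * (1 - x)
        \<le> (1 - s) powr (1/p - 1/2) * s powr (1/2) + s powr (1/p - 1) * s"
      by (simp add: s_def)
    also have "\<dots> = phi p s"
      using powr_times_self[of s "1/p - 1"] s by (simp add: phi_def)
    also have "\<dots> \<le> tail_const p" using phi_le_tail_const p s by simp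
    finally show ?thesis .
  qed
qed

lemma mixed_powr_bound:
  fixes p x y Q :: real
  assumes p: "0 < p" "p < 1" and xy: "0 \<le> y" "y \<le> x" "x + y \<le> Q"
  shows "x powr (1/p - 1/2) * y powr (1/2) + y powr (1/p - 1) * (Q - x) \<le> tail_const p * Q powr (1/p)"
proof (cases "Q = 0")
  case True
  then have "x = 0" "y = 0" using xy by auto
  then show ?thesis using True by simp
next
  case False
  then have Q: "Q > 0" using xy by auto
  define x' where "x' = x / Q"
  define y' where "y' = y / Q"
  have xe: "x = Q * x'" and ye: "y = Q * y'" using Q by (auto simp: x'_def y'_def)
  have xy': "0 \<le> y'" "y' \<le> x'" "x' + y' \<le> 1"
    using xy Q by (auto simp: x'_def y'_def divide_right_mono add_divide_distrib[symmetric])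
  have "x powr (1/p - 1/2) * y powr (1/2) = Q powr (1/p) * (x' powr (1/p - 1/2) * y' powr (1/2))"
  proof -
    have "x powr (1/p - 1/2) * y powr (1/2)
        = (Q powr (1/p - 1/2) * Q powr (1/2)) * (x' powr (1/p - 1/2) * y' powr (1/2))"
      unfolding xe ye by (simp add: powr_mult algebra_simps)
    also have "Q powr (1/p - 1/2) * Q powr (1/2) = Q powr (1/p)" by (simp flip: powr_add)
    finally show ?thesis .
  qed
  moreover have "y powr (1/p - 1) * (Q - x) = Q powr (1/p) * (y' powr (1/p - 1) * (1 - x'))"
  proof -
    have "y powr (1/p - 1) * (Q - x) = (Q powr (1/p - 1) * Q) * (y' powr (1/p - 1) * (1 - x'))"
      unfolding xe ye by (simp add: powr_mult algebra_simps)
    also have "Q powr (1/p - 1) * Q = Q powr (1/p)" using powr_times_self[of Q "1/p - 1"] Q by simp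
    finally show ?thesis .
  qed
  ultimately have "x powr (1/p - 1/2) * y powr (1/2) + y powr (1/p - 1) * (Q - x)
     = Q powr (1/p) * (x' powr (1/p - 1/2) * y' powr (1/2) + y' powr (1/p - 1) * (1 - x'))"
    by (simp add: algebra_simps)
  also have "\<dots> \<le> Q powr (1/p) * tail_const p"
    using mixed_powr_bound_unit[OF p xy'] by (intro mult_left_mono) auto
  finally show ?thesis by (simp add: mult.commute)
qed

text \<open>For a decreasing nonnegative sequence, the first term of the sum is bounded by
  \<open>mixed_powr_bound\<close> and each later term by \<open>P 1 powr (1/p - 1) * P (j - 1)\<close>.\<close>

lemma sum_consecutive_powr_le:
  fixes p :: real and P :: "nat \<Rightarrow> real"
  assumes p: "0 < p" "p < 1"
    and nonneg: "\<And>j. j < l \<Longrightarrow> 0 \<le> P j"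
    and decr: "\<And>j. 1 \<le> j \<Longrightarrow> j < l \<Longrightarrow> P j \<le> P (j - 1)"
  shows "(\<Sum>j\<in>{1..<l}. P (j - 1) powr (1/p - 1/2) * P j powr (1/2))
    \<le> tail_const p * (\<Sum>j<l. P j) powr (1/p)"
proof (cases "l \<le> 1")
  case True
  then show ?thesis using tail_const_nonneg[OF p] by simp
next
  case False
  then have l2: "2 \<le> l" by simp
  define Q where "Q = (\<Sum>j<l. P j)"
  have le_P1: "P j \<le> P 1" if "1 \<le> j" "j < l" for j
    using that
  proof (induction j)
    case (Suc j)
    then show ?case using decr[of "Suc j"] by (cases "j = 0") fastforce+
  qed simp
  have e0: "1/p - 1 \<ge> 0" using p by (simp add: field_simps)
  have split: "(\<Sum>j\<in>{1..<l}. P (j - 1) powr (1/p - 1/2) * P j powr (1/2))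
      = P 0 powr (1/p - 1/2) * P 1 powr (1/2) + (\<Sum>j\<in>{2..<l}. P (j - 1) powr (1/p - 1/2) * P j powr (1/2))"
    using l2 by (subst sum.atLeast_Suc_lessThan) (auto simp: numeral_2_eq_2)
  have tail: "(\<Sum>j\<in>{2..<l}. P (j - 1) powr (1/p - 1/2) * P j powr (1/2))
      \<le> (\<Sum>j\<in>{2..<l}. P 1 powr (1/p - 1) * P (j - 1))"
  proof (rule sum_mono)
    fix j assume j: "j \<in> {2..<l}"
    have pj: "0 \<le> P j" "P j \<le> P (j - 1)" "0 \<le> P (j - 1)" "P (j - 1) \<le> P 1"
      using j nonneg decr le_P1[of "j - 1"] by auto
    have "P (j - 1) powr (1/p - 1/2) * P j powr (1/2) \<le> P (j - 1) powr (1/p - 1/2) * P (j - 1) powr (1/2)"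
      using pj by (intro mult_left_mono powr_mono2) auto
    also have "\<dots> = P (j - 1) powr (1/p - 1) * P (j - 1)"
      using powr_times_self[of "P (j - 1)" "1/p - 1"] pj by (simp flip: powr_add)
    also have "\<dots> \<le> P 1 powr (1/p - 1) * P (j - 1)"
      using pj e0 by (intro mult_right_mono powr_mono2) auto
    finally show "P (j - 1) powr (1/p - 1/2) * P j powr (1/2) \<le> P 1 powr (1/p - 1) * P (j - 1)" .
  qed
  have Q_split: "Q = P 0 + (\<Sum>i\<in>{1..<l}. P i)"
    unfolding Q_def using l2 by (simp add: lessThan_atLeast0 sum.atLeast_Suc_lessThan)
  have "(\<Sum>j\<in>{2..<l}. P (j - 1)) = (\<Sum>i\<in>{1..<l - 1}. P i)"
    using sum.shift_bounds_nat_ivl[of "\<lambda>j. P (j - 1)" 1 1 "l - 1"] l2 by (simp add: numeral_2_eq_2)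
  also have "\<dots> \<le> (\<Sum>i\<in>{1..<l}. P i)"
    using nonneg by (intro sum_mono2) auto
  finally have "(\<Sum>j\<in>{2..<l}. P 1 powr (1/p - 1) * P (j - 1)) \<le> P 1 powr (1/p - 1) * (Q - P 0)"
    using Q_split by (simp add: sum_distrib_left[symmetric] mult_left_mono)
  moreover have "P 1 \<le> P 0" using decr[of 1] l2 by simp
  moreover have "P 0 + P 1 \<le> Q"
    using Q_split member_le_sum[of 1 "{1..<l}" P] nonneg l2 by simp
  moreover have "0 \<le> P 1" using nonneg l2 by simp
  ultimately show ?thesis
    using mixed_powr_bound[OF p, of "P 1" "P 0" Q] tail split by (simp add: Q_def)
qed

section \<open>Restricted isometry\<close>

definition inner_prod :: "nat \<Rightarrow> (nat \<Rightarrow> real) \<Rightarrow> (nat \<Rightarrow> real) \<Rightarrow> real" where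
  "inner_prod m u v = (\<Sum>i<m. u i * v i)"

definition restrict_to :: "nat set \<Rightarrow> (nat \<Rightarrow> real) \<Rightarrow> nat \<Rightarrow> real" where
  "restrict_to S z = (\<lambda>j. if j \<in> S then z j else 0)"

definition rip :: "(nat \<Rightarrow> nat \<Rightarrow> real) \<Rightarrow> nat \<Rightarrow> nat \<Rightarrow> nat \<Rightarrow> real \<Rightarrow> bool" where
  "rip A m n s d \<longleftrightarrow> (\<forall>z. sparse s n z \<longrightarrow>
     (1 - d) * sqnorm n z \<le> sqnorm m (matvec A n z) \<and> sqnorm m (matvec A n z) \<le> (1 + d) * sqnorm n z)"

lemma norm2_eq_L2_set: "norm2 m z = L2_set z {..<m}"
  by (simp add: norm2_def sqnorm_def L2_set_def)

lemma sqnorm_nonneg: "0 \<le> sqnorm n z"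
  by (simp add: sqnorm_def sum_nonneg)

lemma sqnorm_eq_square_norm2: "sqnorm n z = (norm2 n z)\<^sup>2"
  by (simp add: norm2_def sqnorm_nonneg)

lemma sqnorm_eq_0_iff: "sqnorm n z = 0 \<longleftrightarrow> (\<forall>j<n. z j = 0)"
  unfolding sqnorm_def by (auto simp: sum_nonneg_eq_0_iff)

lemma norm2_le_diff:
  assumes "\<And>i. i < m \<Longrightarrow> u i = v i - w i"
  shows "norm2 m u \<le> norm2 m v + norm2 m w"
proof -
  have "norm2 m u = L2_set (\<lambda>i. v i + (- w i)) {..<m}"
    unfolding norm2_eq_L2_set using assms by (intro L2_set_cong) auto
  also have "\<dots> \<le> L2_set v {..<m} + L2_set (\<lambda>i. - w i) {..<m}"
    by (rule L2_set_triangle_ineq)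
  finally show ?thesis by (simp add: norm2_eq_L2_set L2_set_def)
qed

lemma matvec_cong: "(\<And>j. j < n \<Longrightarrow> u j = v j) \<Longrightarrow> matvec A n u = matvec A n v"
  unfolding matvec_def by (intro ext sum.cong) auto

lemma matvec_linear: "matvec A n (\<lambda>j. a * u j + b * v j) i = a * matvec A n u i + b * matvec A n v i"
  by (simp add: matvec_def sum.distrib sum_distrib_left algebra_simps)

lemma matvec_add: "matvec A n (\<lambda>j. u j + v j) i = matvec A n u i + matvec A n v i"
  by (simp add: matvec_def sum.distrib algebra_simps)

lemma matvec_diff: "matvec A n (\<lambda>j. u j - v j) i = matvec A n u i - matvec A n v i"
  by (simp add: matvec_def sum_subtractf algebra_simps)

lemma matvec_sum: "matvec A n (\<lambda>t. \<Sum>j\<in>J. F j t) i = (\<Sum>j\<in>J. matvec A n (F j) i)"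
  unfolding matvec_def by (simp add: sum_distrib_left sum.swap[of _ J])

lemma sqnorm_linear:
  "sqnorm m (\<lambda>i. a * U i + b * V i) = a\<^sup>2 * sqnorm m U + 2 * a * b * inner_prod m U V + b\<^sup>2 * sqnorm m V"
  by (simp add: sqnorm_def inner_prod_def power2_eq_square sum.distrib sum_distrib_left algebra_simps)

lemma inner_prod_self: "inner_prod m U U = sqnorm m U"
  by (simp add: inner_prod_def sqnorm_def power2_eq_square)

lemma sqnorm_sum:
  "sqnorm m (\<lambda>i. \<Sum>j\<in>J. F j i) = (\<Sum>j\<in>J. \<Sum>j'\<in>J. inner_prod m (F j) (F j'))"
proof -
  have "sqnorm m (\<lambda>i. \<Sum>j\<in>J. F j i) = (\<Sum>i<m. \<Sum>j\<in>J. \<Sum>j'\<in>J. F j i * F j' i)"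
    unfolding sqnorm_def by (simp add: power2_eq_square sum_product)
  also have "\<dots> = (\<Sum>j\<in>J. \<Sum>j'\<in>J. \<Sum>i<m. F j i * F j' i)"
    by (simp add: sum.swap[of _ "{..<m}"])
  finally show ?thesis by (simp add: inner_prod_def)
qed

lemma sqnorm_restrict_to:
  assumes "U \<subseteq> {..<n}"
  shows "sqnorm n (restrict_to U h) = (\<Sum>e\<in>U. (h e)\<^sup>2)"
proof -
  have "sqnorm n (restrict_to U h) = (\<Sum>t<n. if t \<in> U then (h t)\<^sup>2 else 0)"
    unfolding sqnorm_def restrict_to_def by (intro sum.cong) auto
  also have "\<dots> = (\<Sum>t\<in>{..<n} \<inter> U. (h t)\<^sup>2)" by (rule sum.inter_restrict[symmetric]) simp
  also have "{..<n} \<inter> U = U" using assms by auto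
  finally show ?thesis .
qed

lemma sparseI:
  assumes "U \<subseteq> {..<n}" "card U \<le> s" "\<And>j. j < n \<Longrightarrow> j \<notin> U \<Longrightarrow> z j = 0"
  shows "sparse s n z"
proof -
  have "card {j. j < n \<and> z j \<noteq> 0} \<le> card U"
    using assms by (intro card_mono) (auto intro: finite_subset)
  then show ?thesis using assms by (simp add: sparse_def)
qed

lemma sparse_restrict_to:
  "U \<subseteq> {..<n} \<Longrightarrow> card U \<le> s \<Longrightarrow> sparse s n (restrict_to U h)"
  by (rule sparseI) (auto simp: restrict_to_def)

text \<open>The defining set of \<open>ric\<close> is nonempty (it contains one plus the squared Frobenius
  norm of \<open>A\<close>), so its infimum still satisfies both RIP inequalities.\<close>

lemma rip_ric: "rip A m n s (ric A m n s)"
proof -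
  define D where "D = {d. \<forall>z. sparse s n z \<longrightarrow>
      (1 - d) * sqnorm n z \<le> sqnorm m (matvec A n z) \<and>
      sqnorm m (matvec A n z) \<le> (1 + d) * sqnorm n z}"
  define c where "c = (\<Sum>i<m. \<Sum>j<n. (A i j)\<^sup>2)"
  have c: "0 \<le> c" unfolding c_def by (intro sum_nonneg) auto
  have upper: "sqnorm m (matvec A n z) \<le> c * sqnorm n z" for z
  proof -
    have "sqnorm m (matvec A n z) = (\<Sum>i<m. (\<Sum>j<n. A i j * z j)\<^sup>2)"
      by (simp add: sqnorm_def matvec_def)
    also have "\<dots> \<le> (\<Sum>i<m. (\<Sum>j<n. (A i j)\<^sup>2) * (\<Sum>j<n. (z j)\<^sup>2))"
      by (intro sum_mono Cauchy_Schwarz_ineq_sum)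
    finally show ?thesis by (simp add: c_def sqnorm_def sum_distrib_right)
  qed
  have "(1 - (1 + c)) * sqnorm n z \<le> sqnorm m (matvec A n z)
      \<and> sqnorm m (matvec A n z) \<le> (1 + (1 + c)) * sqnorm n z" for z
    using upper[of z] mult_right_mono[OF c sqnorm_nonneg[of n z]]
      sqnorm_nonneg[of n z] sqnorm_nonneg[of m "matvec A n z"] by (simp add: algebra_simps)
  then have "1 + c \<in> D" by (simp add: D_def)
  then have "D \<noteq> {}" by blast
  have ricD: "ric A m n s = Inf D" by (simp add: ric_def D_def)
  show ?thesis unfolding rip_def
  proof (intro allI impI)
    fix z assume z: "sparse s n z"
    define S where "S = sqnorm n z"
    define q where "q = sqnorm m (matvec A n z)"
    show "(1 - ric A m n s) * sqnorm n z \<le> sqnorm m (matvec A n z) \<and>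
        sqnorm m (matvec A n z) \<le> (1 + ric A m n s) * sqnorm n z"
    proof (cases "S = 0")
      case True
      then have "q = 0" using upper[of z] sqnorm_nonneg[of m "matvec A n z"]
        by (simp add: S_def q_def)
      then show ?thesis using True by (simp add: S_def q_def)
    next
      case False
      then have S: "S > 0" using sqnorm_nonneg[of n z] S_def by linarith
      have "1 - q / S \<le> d \<and> q / S - 1 \<le> d" if "d \<in> D" for d
        using that z S by (auto simp: D_def S_def q_def field_simps)
      then have "1 - q / S \<le> Inf D" "q / S - 1 \<le> Inf D"
        using \<open>D \<noteq> {}\<close> by (auto intro!: cInf_greatest)
      then show ?thesis using S by (auto simp: ricD S_def q_def field_simps)
    qed
  qed
qed

lemma rip_sum_diff_vectors:
  assumes rip: "rip A m n (2 * k) d"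
    and UV: "U \<subseteq> {..<n}" "V \<subseteq> {..<n}" "U \<inter> V = {}" "card U \<le> k" "card V \<le> k"
    and u0: "\<And>j. j < n \<Longrightarrow> j \<notin> U \<Longrightarrow> u j = 0"
    and v0: "\<And>j. j < n \<Longrightarrow> j \<notin> V \<Longrightarrow> v j = 0"
    and b: "b = 1 \<or> b = -1"
  shows "(1 - d) * (a\<^sup>2 * sqnorm n u + sqnorm n v)
      \<le> a\<^sup>2 * sqnorm m (matvec A n u) + 2 * a * b * inner_prod m (matvec A n u) (matvec A n v)
         + sqnorm m (matvec A n v)
    \<and> a\<^sup>2 * sqnorm m (matvec A n u) + 2 * a * b * inner_prod m (matvec A n u) (matvec A n v)
         + sqnorm m (matvec A n v) \<le> (1 + d) * (a\<^sup>2 * sqnorm n u + sqnorm n v)"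
proof -
  define z where "z = (\<lambda>j. a * u j + b * v j)"
  have b2: "b\<^sup>2 = 1" using b by auto
  have "z j = 0" if "j < n" "j \<notin> U \<union> V" for j
    using u0[of j] v0[of j] that by (simp add: z_def)
  then have "{j. j < n \<and> z j \<noteq> 0} \<subseteq> U \<union> V" by blast
  then have "card {j. j < n \<and> z j \<noteq> 0} \<le> card (U \<union> V)"
    using UV by (intro card_mono) (auto intro: finite_subset)
  then have sp: "sparse (2 * k) n z"
    using card_Un_le[of U V] UV by (simp add: sparse_def)
  have "u j * v j = 0" if "j < n" for j
    using u0[OF that] v0[OF that] UV(3) by (cases "j \<in> U") auto
  then have "inner_prod n u v = 0" unfolding inner_prod_def by (intro sum.neutral) simp
  then have sz: "sqnorm n z = a\<^sup>2 * sqnorm n u + sqnorm n v"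
    unfolding z_def sqnorm_linear b2 by simp
  have az: "sqnorm m (matvec A n z) = a\<^sup>2 * sqnorm m (matvec A n u)
      + 2 * a * b * inner_prod m (matvec A n u) (matvec A n v) + sqnorm m (matvec A n v)"
    unfolding z_def matvec_linear[abs_def] sqnorm_linear b2 by simp
  show ?thesis using rip[unfolded rip_def, rule_format, OF sp] unfolding sz az .
qed

text \<open>Polarization: apply the RIP to \<open>a u + v\<close> and \<open>a u - v\<close> with \<open>a = \<parallel>v\<parallel> / \<parallel>u\<parallel>\<close>.\<close>

lemma rip_inner_disjoint_le:
  assumes rip: "rip A m n (2 * k) d" and d: "0 \<le> d"
    and UV: "U \<subseteq> {..<n}" "V \<subseteq> {..<n}" "U \<inter> V = {}" "card U \<le> k" "card V \<le> k"
    and u0: "\<And>j. j < n \<Longrightarrow> j \<notin> U \<Longrightarrow> u j = 0"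
    and v0: "\<And>j. j < n \<Longrightarrow> j \<notin> V \<Longrightarrow> v j = 0"
  shows "\<bar>inner_prod m (matvec A n u) (matvec A n v)\<bar> \<le> d * sqrt (sqnorm n u) * sqrt (sqnorm n v)"
proof -
  define Su where "Su = sqnorm n u"
  define Sv where "Sv = sqnorm n v"
  define I where "I = inner_prod m (matvec A n u) (matvec A n v)"
  show ?thesis
  proof (cases "Su = 0 \<or> Sv = 0")
    case True
    then have "matvec A n u = (\<lambda>i. 0) \<or> matvec A n v = (\<lambda>i. 0)"
      by (auto simp: Su_def Sv_def sqnorm_eq_0_iff matvec_def)
    then show ?thesis using d sqnorm_nonneg[of n u] sqnorm_nonneg[of n v] by (auto simp: inner_prod_def)
  next
    case False
    then have pos: "Su > 0" "Sv > 0"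
      using sqnorm_nonneg unfolding Su_def Sv_def by (metis less_eq_real_def)+
    define a where "a = sqrt Sv / sqrt Su"
    have a: "a > 0" using pos by (simp add: a_def)
    have a2: "a\<^sup>2 * Su = Sv" using pos by (simp add: a_def power_divide)
    define Qu where "Qu = a\<^sup>2 * sqnorm m (matvec A n u) + sqnorm m (matvec A n v)"
    have plus: "(1 - d) * (a\<^sup>2 * Su + Sv) \<le> Qu + 2 * a * I" "Qu + 2 * a * I \<le> (1 + d) * (a\<^sup>2 * Su + Sv)"
      using rip_sum_diff_vectors[where u = u and v = v and b = 1 and a = a, OF rip UV u0 v0]
      unfolding Qu_def I_def Su_def Sv_def by simp_all
    have minus: "(1 - d) * (a\<^sup>2 * Su + Sv) \<le> Qu - 2 * a * I" "Qu - 2 * a * I \<le> (1 + d) * (a\<^sup>2 * Su + Sv)"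
      using rip_sum_diff_vectors[where u = u and v = v and b = "-1" and a = a, OF rip UV u0 v0]
      unfolding Qu_def I_def Su_def Sv_def by simp_all
    have "4 * a * \<bar>I\<bar> \<le> 2 * d * (a\<^sup>2 * Su + Sv)"
      using plus minus a by (cases "I \<ge> 0") (simp_all add: algebra_simps)
    then have "a * \<bar>I\<bar> \<le> d * Sv" using a2 by simp
    then have "\<bar>I\<bar> \<le> d * (Sv / a)" using a by (simp add: pos_le_divide_eq mult.commute)
    also have "Sv / a = (sqrt Sv * sqrt Sv) * sqrt Su / sqrt Sv"
      using pos by (simp add: a_def)
    also have "\<dots> = sqrt Su * sqrt Sv" using pos by (simp add: field_simps del: real_sqrt_mult_self)
    finally show ?thesis by (simp add: I_def Su_def Sv_def mult.assoc)
  qed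
qed

lemma double_sum_le:
  fixes G :: "nat \<Rightarrow> nat \<Rightarrow> real"
  assumes "finite J"
    and "\<And>j j'. j \<in> J \<Longrightarrow> j' \<in> J \<Longrightarrow> G j j' \<le> d * b j * b j' + (if j = j' then c j else 0)"
  shows "(\<Sum>j\<in>J. \<Sum>j'\<in>J. G j j') \<le> d * (\<Sum>j\<in>J. b j)\<^sup>2 + (\<Sum>j\<in>J. c j)"
proof -
  have "(\<Sum>j\<in>J. \<Sum>j'\<in>J. G j j') \<le> (\<Sum>j\<in>J. \<Sum>j'\<in>J. d * b j * b j' + (if j = j' then c j else 0))"
    using assms by (intro sum_mono) auto
  also have "\<dots> = (\<Sum>j\<in>J. \<Sum>j'\<in>J. d * b j * b j') + (\<Sum>j\<in>J. c j)"
    using assms(1) by (simp add: sum.distrib sum.delta)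
  also have "(\<Sum>j\<in>J. \<Sum>j'\<in>J. d * b j * b j') = d * (\<Sum>j\<in>J. \<Sum>j'\<in>J. b j * b j')"
    by (simp add: sum_distrib_left mult.assoc)
  also have "(\<Sum>j\<in>J. \<Sum>j'\<in>J. b j * b j') = (\<Sum>j\<in>J. b j)\<^sup>2"
    by (simp add: power2_eq_square sum_product)
  finally show ?thesis .
qed

lemma powr_mult_diff_le_g:
  fixes p c P Q :: real
  assumes p: "0 < p" "p < 1" and c: "0 < c" and P: "0 \<le> P" and Q: "0 \<le> Q"
  shows "P powr (2/p - 1) * (Q - c * P) \<le> c powr (1 - 2/p) * g p * Q powr (2/p)"
proof (cases "Q - c * P \<le> 0")
  case True
  then have "P powr (2/p - 1) * (Q - c * P) \<le> 0" by (simp add: mult_nonneg_nonpos)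
  also have "0 \<le> c powr (1 - 2/p) * g p * Q powr (2/p)" using g_nonneg[OF p(1)] by simp
  finally show ?thesis .
next
  case False
  define a where "a = 2/p - 1"
  define t where "t = c * P / Q"
  have Qpos: "Q > 0" using False c P by (smt (verit) mult_nonneg_nonneg)
  have t: "0 \<le> t" "t \<le> 1" using False Qpos c P by (auto simp: t_def field_simps)
  have "P powr a * (Q - c * P) = (t * Q / c) powr a * (Q * (1 - t))"
    using Qpos c by (simp add: t_def field_simps)
  also have "\<dots> = (Q powr a * Q) * ((1 - t) * (1 - (1 - t)) powr a) / c powr a"
    using t Qpos c by (simp add: powr_divide powr_mult)
  also have "\<dots> \<le> (Q powr a * Q) * g p / c powr a"
    using mult_powr_le_g[of p "1 - t"] p t Qpos
    by (intro divide_right_mono mult_left_mono) (auto simp: a_def)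
  also have "\<dots> = c powr (1 - 2/p) * g p * Q powr (2/p)"
    using powr_times_self[of Q a] powr_diff_eq_inverse[of c 1 "2/p"] Q by (simp add: a_def)
  finally show ?thesis by (simp add: a_def)
qed

lemma le_completed_square:
  fixes a0 c Z X \<eta> :: real
  assumes c: "0 < c" and Z: "0 \<le> Z" and \<eta>: "0 \<le> \<eta>"
    and main: "c * a0 \<le> c * Z + 2 * X * \<eta> + \<eta>\<^sup>2"
    and X: "X\<^sup>2 \<le> 2 * (c * Z)"
  shows "a0 \<le> (sqrt Z + sqrt 2 * \<eta> / sqrt c)\<^sup>2"
proof -
  have "\<bar>X\<bar> \<le> sqrt 2 * sqrt c * sqrt Z"
    using real_sqrt_le_mono[OF X] by (simp add: real_sqrt_mult)
  then have "X \<le> sqrt 2 * sqrt c * sqrt Z" by simp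
  then have "X * \<eta> \<le> (sqrt 2 * sqrt c * sqrt Z) * \<eta>"
    using \<eta> by (rule mult_right_mono)
  then have "c * a0 \<le> c * Z + 2 * (sqrt 2 * sqrt c * sqrt Z) * \<eta> + 2 * \<eta>\<^sup>2"
    using main zero_le_power2[of \<eta>] by (simp only: mult.assoc)
  also have "\<dots> = (sqrt c * sqrt Z + sqrt 2 * \<eta>)\<^sup>2"
    using c Z by (simp add: power2_eq_square algebra_simps)
  also have "\<dots> = c * (sqrt Z + sqrt 2 * \<eta> / sqrt c)\<^sup>2"
    using c by (simp add: power2_eq_square field_simps)
  finally show ?thesis using c by simp
qed

lemma head_energy_le:
  fixes k P0 Q W a0 a1 X B \<eta> d p :: real
  assumes p: "0 < p" "p < 1" and k: "k > 0" and d: "1/2 \<le> d" "d < 1"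
    and P: "0 \<le> P0" "0 \<le> Q" and \<eta>: "0 \<le> \<eta>"
    and head: "(1 - d) * (a0 + a1) \<le> (X + \<eta>)\<^sup>2"
    and tail: "X\<^sup>2 \<le> W + d * B\<^sup>2"
    and B: "B\<^sup>2 \<le> tail_const_sq p * (k powr (1 - 2/p) * Q powr (2/p))"
    and W: "W \<le> (P0 / k) powr (2/p - 1) * (Q - P0)"
    and a1: "k powr (1 - 2/p) * P0 powr (2/p) \<le> a1"
  shows "a0 \<le> (sqrt (((2 - d) powr (1 - 2/p) * g p + d * tail_const_sq p) / (1 - d)
                   * (k powr (1 - 2/p) * Q powr (2/p))) + sqrt 2 * \<eta> / sqrt (1 - d))\<^sup>2"
proof -
  define K where "K = k powr (1 - 2/p) * Q powr (2/p)"
  define G where "G = (2 - d) powr (1 - 2/p) * g p"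
  define M where "M = tail_const_sq p"
  define Z where "Z = (G + d * M) / (1 - d) * K"
  have K: "0 \<le> K" by (simp add: K_def)
  have G: "0 \<le> G" using g_nonneg[OF p(1)] by (simp add: G_def)
  have M: "2 * g p \<le> M" "0 \<le> M" using tail_const_sq_eq_max[OF p] g_nonneg[OF p(1)] by (auto simp: M_def)
  have Z: "0 \<le> Z" using K G M d by (simp add: Z_def)
  have cZ: "(1 - d) * Z = G * K + d * M * K" using d by (simp add: Z_def field_simps)
  have kP: "(P0 / k) powr (2/p - 1) = k powr (1 - 2/p) * P0 powr (2/p - 1)"
    using k P powr_diff_eq_inverse[of k 1 "2/p"] by (simp add: powr_divide)
  have "W - (1 - d) * a1 \<le> k powr (1 - 2/p) * (P0 powr (2/p - 1) * (Q - (2 - d) * P0))"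
  proof -
    have "P0 powr (2/p) = P0 powr (2/p - 1) * P0" using powr_times_self[of P0 "2/p - 1"] P by simp
    then show ?thesis
      using W kP mult_left_mono[OF a1, of "1 - d"] d by (simp add: algebra_simps)
  qed
  also have "\<dots> \<le> k powr (1 - 2/p) * ((2 - d) powr (1 - 2/p) * g p * Q powr (2/p))"
    using powr_mult_diff_le_g[OF p, of "2 - d" P0 Q] P d by (intro mult_left_mono) auto
  also have "\<dots> = G * K" by (simp add: G_def K_def mult_ac)
  finally have head_tail: "W - (1 - d) * a1 \<le> G * K" .
  have "W \<le> k powr (1 - 2/p) * (P0 powr (2/p - 1) * (Q - 1 * P0))"
    using W kP by simp
  also have "\<dots> \<le> k powr (1 - 2/p) * (1 powr (1 - 2/p) * g p * Q powr (2/p))"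
    using powr_mult_diff_le_g[OF p, of 1 P0 Q] P by (intro mult_left_mono) auto
  also have "\<dots> = g p * K" by (simp add: K_def mult_ac)
  finally have tail_W: "W \<le> g p * K" .
  have dB: "d * B\<^sup>2 \<le> d * M * K" using B d by (simp add: M_def K_def mult_left_mono)
  have "g p \<le> d * M"
    using M d mult_right_mono[of "1/2" d M] by linarith
  then have "g p * K \<le> d * M * K"
    using K by (rule mult_right_mono)
  then have tail_Z: "X\<^sup>2 \<le> 2 * ((1 - d) * Z)"
    using tail tail_W dB cZ mult_nonneg_nonneg[OF G K] by linarith
  have head_Z: "(1 - d) * a0 \<le> (1 - d) * Z + 2 * X * \<eta> + \<eta>\<^sup>2"
  proof -
    have "(X + \<eta>)\<^sup>2 = X\<^sup>2 + 2 * X * \<eta> + \<eta>\<^sup>2" by (simp add: power2_eq_square algebra_simps)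
    moreover have "(1 - d) * (a0 + a1) = (1 - d) * a0 + (1 - d) * a1" by (simp add: algebra_simps)
    ultimately show ?thesis using head tail head_tail dB cZ by linarith
  qed
  have "a0 \<le> (sqrt Z + sqrt 2 * \<eta> / sqrt (1 - d))\<^sup>2"
    using le_completed_square[OF _ Z \<eta> head_Z tail_Z] d by simp
  then show ?thesis by (simp add: Z_def G_def M_def K_def)
qed

lemma head_powr_le:
  fixes k Q F \<eta> d p a0 N :: real
  assumes p: "0 < p" "p < 1" and k: "k > 0" and Q: "0 \<le> Q" and F: "0 \<le> F" and \<eta>: "0 \<le> \<eta>"
    and d: "d < 1" and a0: "0 \<le> a0"
    and head: "a0 \<le> (sqrt (F * (k powr (1 - 2/p) * Q powr (2/p))) + sqrt 2 * \<eta> / sqrt (1 - d))\<^sup>2"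
    and N: "N \<le> k powr (1 - p/2) * a0 powr (p/2)"
  shows "N \<le> F powr (p/2) * Q + 2 powr (p/2) * k powr (1 - p/2) * \<eta> powr p / (1 - d) powr (p/2)"
proof -
  define Z where "Z = sqrt (F * (k powr (1 - 2/p) * Q powr (2/p)))"
  define E where "E = sqrt 2 * \<eta> / sqrt (1 - d)"
  have Z: "0 \<le> Z" and E: "0 \<le> E" using F \<eta> d by (auto simp: Z_def E_def)
  have "a0 powr (p/2) \<le> ((Z + E)\<^sup>2) powr (p/2)"
    using head a0 p by (intro powr_mono2) (auto simp: Z_def E_def)
  also have "((Z + E)\<^sup>2) powr (p/2) = (Z + E) powr p"
    using Z E by (simp add: abs_powr_eq_sq_powr[symmetric])
  also have "\<dots> \<le> Z powr p + E powr p" using Z E p by (intro powr_add_le) auto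
  finally have a: "a0 powr (p/2) \<le> Z powr p + E powr p" .
  have zp: "k powr (1 - p/2) * Z powr p = F powr (p/2) * Q"
  proof -
    have "Z powr p = (F * (k powr (1 - 2/p) * Q powr (2/p))) powr (p/2)"
      using F Q unfolding Z_def by (simp add: sqrt_powr)
    also have "\<dots> = F powr (p/2) * (k powr ((1 - 2/p) * (p/2)) * Q powr ((2/p) * (p/2)))"
      by (simp add: powr_mult powr_powr)
    also have "(1 - 2/p) * (p/2) = p/2 - 1" using p by (simp add: field_simps)
    also have "(2/p) * (p/2) = 1" using p by simp
    finally have "Z powr p = F powr (p/2) * (k powr (p/2 - 1) * Q)" using Q by simp
    moreover have "k powr (1 - p/2) * k powr (p/2 - 1) = 1" using k by (simp flip: powr_add)
    ultimately show ?thesis by (metis (no_types, lifting) mult.left_commute mult.right_neutral)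
  qed
  have ep: "E powr p = 2 powr (p/2) * \<eta> powr p / (1 - d) powr (p/2)"
    using d \<eta> by (simp add: E_def powr_divide powr_mult sqrt_powr)
  have "N \<le> k powr (1 - p/2) * (Z powr p + E powr p)"
    using N a by (smt (verit) mult_left_mono powr_ge_zero)
  also have "\<dots> = F powr (p/2) * Q + k powr (1 - p/2) * E powr p"
    using zp by (simp add: distrib_left)
  finally show ?thesis by (simp add: ep mult_ac)
qed

section \<open>Sorted blocks and the null space property\<close>

lemma exists_decreasing_enumeration:
  fixes h :: "nat \<Rightarrow> real"
  assumes "finite R" "card R = N"
  shows "\<exists>\<sigma>. bij_betw \<sigma> {..<N} R \<and> (\<forall>i j. i \<le> j \<longrightarrow> j < N \<longrightarrow> \<bar>h (\<sigma> j)\<bar> \<le> \<bar>h (\<sigma> i)\<bar>)"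
proof -
  define xs where "xs = sort_key (\<lambda>j. - \<bar>h j\<bar>) (sorted_list_of_set R)"
  have d: "distinct xs" and s: "set xs = R" and len: "length xs = N"
    using assms by (auto simp: xs_def)
  have b: "bij_betw ((!) xs) {..<N} R" using d s len by (intro bij_betw_nth) auto
  have sorted: "sorted (map (\<lambda>j. - \<bar>h j\<bar>) xs)" by (simp add: xs_def)
  have "\<bar>h (xs ! j)\<bar> \<le> \<bar>h (xs ! i)\<bar>" if "i \<le> j" "j < N" for i j
  proof -
    have "map (\<lambda>j. - \<bar>h j\<bar>) xs ! i \<le> map (\<lambda>j. - \<bar>h j\<bar>) xs ! j"
      using sorted_nth_mono[OF sorted, of i j] that len by simp
    then show ?thesis using that len by simp
  qed
  then show ?thesis using b by blast
qed

lemma sum_lessThan_mult_blocks: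
  fixes G :: "nat \<Rightarrow> 'a::comm_monoid_add"
  shows "(\<Sum>t<l * k. G t) = (\<Sum>j<l. \<Sum>i<k. G (j * k + i))"
proof -
  have "(\<Sum>t<l * k. G t) = (\<Sum>j<l. sum G {j * k..<j * k + k})"
    by (rule sum.nat_group[symmetric])
  also have "\<dots> = (\<Sum>j<l. \<Sum>i<k. G (j * k + i))"
  proof (rule sum.cong[OF refl])
    fix j
    have "sum G {0 + j * k..<k + j * k} = (\<Sum>i\<in>{0..<k}. G (i + j * k))"
      by (rule sum.shift_bounds_nat_ivl)
    then show "sum G {j * k..<j * k + k} = (\<Sum>i<k. G (j * k + i))"
      by (simp add: add.commute lessThan_atLeast0)
  qed
  finally show ?thesis .
qed

lemma block_index_less:
  fixes j i k l :: nat
  assumes "j < l" "i < k"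
  shows "j * k + i < l * k"
proof -
  have "j * k + i < Suc j * k" using assms by simp
  also have "Suc j * k \<le> l * k" using assms by (intro mult_le_mono1) simp
  finally show ?thesis .
qed

lemma sum_sq_le_powr_bound_mult:
  fixes z :: "nat \<Rightarrow> real"
  assumes p: "0 < p" "p < 1" and c: "0 \<le> c" and bound: "\<And>i. i \<in> S \<Longrightarrow> \<bar>z i\<bar> powr p \<le> c"
  shows "(\<Sum>i\<in>S. (z i)\<^sup>2) \<le> c powr (2 / p - 1) * (\<Sum>i\<in>S. \<bar>z i\<bar> powr p)"
proof -
  have "(z i)\<^sup>2 \<le> c powr (2 / p - 1) * \<bar>z i\<bar> powr p" if "i \<in> S" for i
  proof (cases "z i = 0")
    case False
    have "(z i)\<^sup>2 = \<bar>z i\<bar> powr p * \<bar>z i\<bar> powr (2 - p)"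
      using powr_add[of "\<bar>z i\<bar>" p "2 - p"] by simp
    also have "\<bar>z i\<bar> powr (2 - p) = (\<bar>z i\<bar> powr p) powr (2 / p - 1)"
    proof -
      have "p * (2 / p - 1) = 2 - p" using p by (simp add: field_simps)
      then show ?thesis by (simp add: powr_powr)
    qed
    also have "\<bar>z i\<bar> powr p * (\<bar>z i\<bar> powr p) powr (2 / p - 1) \<le> \<bar>z i\<bar> powr p * c powr (2 / p - 1)"
      using p bound[OF that] by (intro mult_left_mono powr_mono2) (auto simp: field_simps)
    finally show ?thesis by (simp add: mult.commute)
  qed simp
  then have "(\<Sum>i\<in>S. (z i)\<^sup>2) \<le> (\<Sum>i\<in>S. c powr (2 / p - 1) * \<bar>z i\<bar> powr p)"
    by (intro sum_mono) auto
  then show ?thesis by (simp add: sum_distrib_left)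
qed

text \<open>The complement of \<open>T\<close> enumerated by \<open>\<sigma>\<close> in order of decreasing \<open>|h|\<close> and cut into
  \<open>l\<close> consecutive blocks of size \<open>k\<close>; block \<open>j\<close> is the paper's \<open>T\<^sub>j\<^sub>+\<^sub>1\<close>.\<close>

locale sorted_blocks =
  fixes n k l :: nat and T :: "nat set" and \<sigma> :: "nat \<Rightarrow> nat" and h :: "nat \<Rightarrow> real"
  assumes k_pos: "0 < k" and l_pos: "0 < l"
    and T_subset: "T \<subseteq> {..<n}" and card_T: "card T = k"
    and enum: "bij_betw \<sigma> {..<l * k} ({..<n} - T)"
    and decreasing: "\<And>i j. i \<le> j \<Longrightarrow> j < l * k \<Longrightarrow> \<bar>h (\<sigma> j)\<bar> \<le> \<bar>h (\<sigma> i)\<bar>"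
begin

definition block :: "nat \<Rightarrow> nat set" where
  "block j = (\<lambda>i. \<sigma> (j * k + i)) ` {..<k}"

lemma finite_T: "finite T"
  using T_subset finite_subset by blast

lemma inj_on_block_index: "j < l \<Longrightarrow> inj_on (\<lambda>i. \<sigma> (j * k + i)) {..<k}"
  using enum block_index_less[of j l] unfolding bij_betw_def
  by (intro inj_onI) (auto dest: inj_onD)

lemma block_subset: "j < l \<Longrightarrow> block j \<subseteq> {..<n} - T"
  using enum block_index_less[of j l] unfolding bij_betw_def block_def by auto

lemma card_block: "j < l \<Longrightarrow> card (block j) = k"
  using card_image[OF inj_on_block_index] by (simp add: block_def)

lemma sum_block: "j < l \<Longrightarrow> (\<Sum>e\<in>block j. F e) = (\<Sum>i<k. F (\<sigma> (j * k + i)))"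
  unfolding block_def using sum.reindex[OF inj_on_block_index, of j F] by (simp add: comp_def)

lemma block_disjoint:
  assumes "j < l" "j' < l" "j \<noteq> j'"
  shows "block j \<inter> block j' = {}"
proof (rule ccontr)
  assume "block j \<inter> block j' \<noteq> {}"
  then obtain i i' where ii: "i < k" "i' < k" "\<sigma> (j * k + i) = \<sigma> (j' * k + i')"
    by (auto simp: block_def)
  then have "j * k + i = j' * k + i'"
    using enum block_index_less[OF assms(1) ii(1)] block_index_less[OF assms(2) ii(2)]
    unfolding bij_betw_def by (auto dest: inj_onD)
  then have "(j * k + i) div k = (j' * k + i') div k" by simp
  then show False using ii assms by simp
qed

lemma block_cover: "e \<in> {..<n} - T \<Longrightarrow> \<exists>j<l. e \<in> block j"
proof -
  assume "e \<in> {..<n} - T"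
  then obtain t where t: "t < l * k" "e = \<sigma> t"
    using enum unfolding bij_betw_def by auto
  have "t div k < l" using t k_pos by (simp add: less_mult_imp_div_less)
  moreover have "t = t div k * k + t mod k" by simp
  moreover have "t mod k < k" using k_pos by simp
  ultimately show ?thesis using t unfolding block_def by (metis imageI lessThan_iff)
qed

lemma sum_complement_eq_sum_blocks:
  "(\<Sum>e\<in>{..<n} - T. F e) = (\<Sum>j<l. \<Sum>e\<in>block j. F e)"
proof -
  have "(\<Sum>e\<in>{..<n} - T. F e) = (\<Sum>t<l * k. F (\<sigma> t))"
    using sum.reindex_bij_betw[OF enum, of F] by simp
  also have "\<dots> = (\<Sum>j<l. \<Sum>i<k. F (\<sigma> (j * k + i)))" by (rule sum_lessThan_mult_blocks)
  finally show ?thesis by (simp add: sum_block)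
qed

definition mass :: "real \<Rightarrow> nat \<Rightarrow> real" where
  "mass p j = (\<Sum>e\<in>block j. \<bar>h e\<bar> powr p)"

definition energy :: "nat \<Rightarrow> real" where
  "energy j = (\<Sum>e\<in>block j. (h e)\<^sup>2)"

lemma mass_nonneg: "0 \<le> mass p j"
  by (simp add: mass_def sum_nonneg)

lemma energy_nonneg: "0 \<le> energy j"
  by (simp add: energy_def sum_nonneg)

lemma mass_decreasing:
  assumes p: "0 < p" and j: "1 \<le> j" "j < l"
  shows "mass p j \<le> mass p (j - 1)"
proof -
  have "\<bar>h (\<sigma> (j * k + i))\<bar> powr p \<le> \<bar>h (\<sigma> ((j - 1) * k + i))\<bar> powr p" if "i < k" for i
  proof -
    have "(j - 1) * k + i \<le> j * k + i" by (simp add: diff_mult_distrib)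
    then show ?thesis
      using decreasing block_index_less[OF j(2) that] p by (intro powr_mono2) auto
  qed
  then have "(\<Sum>i<k. \<bar>h (\<sigma> (j * k + i))\<bar> powr p) \<le> (\<Sum>i<k. \<bar>h (\<sigma> ((j - 1) * k + i))\<bar> powr p)"
    by (intro sum_mono) simp
  then show ?thesis using j by (simp add: mass_def sum_block)
qed

lemma entry_powr_le_mass_average:
  assumes p: "0 < p" and jj: "j' < j" "j < l" and e: "e \<in> block j"
  shows "\<bar>h e\<bar> powr p \<le> mass p j' / k"
proof -
  obtain i where i: "i < k" "e = \<sigma> (j * k + i)" using e by (auto simp: block_def)
  have "\<bar>h e\<bar> powr p \<le> \<bar>h (\<sigma> (j' * k + i'))\<bar> powr p" if "i' < k" for i'
  proof -
    have "j' * k + i' < Suc j' * k" using that by simp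
    also have "Suc j' * k \<le> j * k" using jj by (intro mult_le_mono1) simp
    finally show ?thesis
      using i decreasing block_index_less[OF jj(2) i(1)] p by (intro powr_mono2) auto
  qed
  then have "(\<Sum>i'<k. \<bar>h e\<bar> powr p) \<le> (\<Sum>i'<k. \<bar>h (\<sigma> (j' * k + i'))\<bar> powr p)"
    by (intro sum_mono) simp
  then have "(\<Sum>i'<k. \<bar>h e\<bar> powr p) \<le> mass p j'"
    using jj by (simp add: mass_def sum_block)
  then show ?thesis using k_pos by (simp add: field_simps)
qed

lemma energy_le_mass:
  assumes p: "0 < p" "p < 1" and jj: "j' < j" "j < l"
  shows "energy j \<le> (mass p j' / k) powr (2/p - 1) * mass p j"
  unfolding energy_def mass_def[of p j]
  using entry_powr_le_mass_average[OF p(1) jj] mass_nonneg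
  by (intro sum_sq_le_powr_bound_mult[OF p]) auto

lemma tail_energy_le:
  assumes p: "0 < p" "p < 1"
  shows "(\<Sum>j\<in>{1..<l}. energy j) \<le> (mass p 0 / k) powr (2/p - 1) * ((\<Sum>j<l. mass p j) - mass p 0)"
proof -
  have "(\<Sum>j\<in>{1..<l}. energy j) \<le> (\<Sum>j\<in>{1..<l}. (mass p 0 / k) powr (2/p - 1) * mass p j)"
    using energy_le_mass[OF p] by (intro sum_mono) auto
  also have "(\<Sum>j<l. mass p j) = mass p 0 + (\<Sum>j\<in>{1..<l}. mass p j)"
    using l_pos by (simp add: lessThan_atLeast0 sum.atLeast_Suc_lessThan)
  ultimately show ?thesis by (simp add: sum_distrib_left)
qed

lemma first_block_energy_ge:
  assumes p: "0 < p" "p < 1"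
  shows "real k powr (1 - 2/p) * mass p 0 powr (2/p) \<le> energy 0"
proof -
  have "mass p 0 \<le> real k powr (1 - p/2) * energy 0 powr (p/2)"
    unfolding mass_def energy_def
    using sum_abs_powr_le_power_mean[of "block 0" k p h] card_block[OF l_pos] k_pos p
      finite_subset[OF block_subset[OF l_pos]] by simp
  then have "mass p 0 powr (2/p) \<le> (real k powr (1 - p/2) * energy 0 powr (p/2)) powr (2/p)"
    using mass_nonneg p by (intro powr_mono2) auto
  also have "\<dots> = real k powr (2/p - 1) * energy 0"
  proof -
    have "(1 - p/2) * (2/p) = 2/p - 1" "(p/2) * (2/p) = 1" using p by (simp_all add: field_simps)
    then show ?thesis using energy_nonneg[of 0] by (simp add: powr_mult powr_powr)
  qed
  finally have "real k powr (1 - 2/p) * mass p 0 powr (2/p)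
      \<le> (real k powr (1 - 2/p) * real k powr (2/p - 1)) * energy 0"
    by (simp add: mult_left_mono mult.assoc)
  also have "real k powr (1 - 2/p) * real k powr (2/p - 1) = 1" using k_pos by (simp flip: powr_add)
  finally show ?thesis by simp
qed

lemma sqrt_energy_le:
  assumes p: "0 < p" "p < 1" and j: "1 \<le> j" "j < l"
  shows "sqrt (energy j) \<le> real k powr (1/2 - 1/p) * (mass p (j - 1) powr (1/p - 1/2) * mass p j powr (1/2))"
proof -
  have "sqrt (energy j) \<le> sqrt ((mass p (j - 1) / k) powr (2/p - 1) * mass p j)"
    using energy_le_mass[OF p, of "j - 1" j] j by (intro real_sqrt_le_mono) auto
  also have "\<dots> = ((mass p (j - 1) / k) powr (2/p - 1) * mass p j) powr (1/2)"
    using mass_nonneg by (simp add: powr_half_sqrt)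
  also have "\<dots> = (mass p (j - 1) / k) powr ((2/p - 1) * (1/2)) * mass p j powr (1/2)"
    by (simp add: powr_mult powr_powr)
  also have "(2/p - 1) * (1/2) = 1/p - 1/2" by (simp add: field_simps)
  also have "(mass p (j - 1) / k) powr (1/p - 1/2) = real k powr (1/2 - 1/p) * mass p (j - 1) powr (1/p - 1/2)"
    using mass_nonneg[of p "j - 1"] powr_diff_eq_inverse[of "real k" "1/2" "1/p"]
    by (simp add: powr_divide)
  finally show ?thesis by (simp add: mult.assoc)
qed

lemma sum_sqrt_energy_sq_le:
  assumes p: "0 < p" "p < 1"
  shows "(\<Sum>j\<in>{1..<l}. sqrt (energy j))\<^sup>2
    \<le> tail_const_sq p * (real k powr (1 - 2/p) * (\<Sum>j<l. mass p j) powr (2/p))"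
proof -
  define Q where "Q = (\<Sum>j<l. mass p j)"
  have "(\<Sum>j\<in>{1..<l}. sqrt (energy j))
      \<le> (\<Sum>j\<in>{1..<l}. real k powr (1/2 - 1/p) * (mass p (j - 1) powr (1/p - 1/2) * mass p j powr (1/2)))"
    using sqrt_energy_le[OF p] by (intro sum_mono) auto
  also have "\<dots> \<le> real k powr (1/2 - 1/p) * (tail_const p * Q powr (1/p))"
    unfolding sum_distrib_left[symmetric] Q_def
    using sum_consecutive_powr_le[OF p, of l "mass p"] mass_nonneg mass_decreasing p
    by (intro mult_left_mono) auto
  finally have le: "(\<Sum>j\<in>{1..<l}. sqrt (energy j)) \<le> real k powr (1/2 - 1/p) * (tail_const p * Q powr (1/p))" .
  have "0 \<le> (\<Sum>j\<in>{1..<l}. sqrt (energy j))"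
    by (intro sum_nonneg) (simp add: energy_nonneg)
  with le have "(\<Sum>j\<in>{1..<l}. sqrt (energy j))\<^sup>2 \<le> (real k powr (1/2 - 1/p) * (tail_const p * Q powr (1/p)))\<^sup>2"
    by (intro power_mono)
  also have "\<dots> = (real k powr (1/2 - 1/p))\<^sup>2 * (tail_const p)\<^sup>2 * (Q powr (1/p))\<^sup>2"
    by (simp add: power_mult_distrib)
  also have "(tail_const p)\<^sup>2 = tail_const_sq p"
    using tail_const_sq_nonneg[OF p] by (simp add: tail_const_def)
  also have "(real k powr (1/2 - 1/p))\<^sup>2 = real k powr (1 - 2/p)"
    by (simp add: powr_squared algebra_simps)
  also have "(Q powr (1/p))\<^sup>2 = Q powr (2/p)" by (simp add: powr_squared)
  finally show ?thesis by (simp add: Q_def mult_ac)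
qed

end

context sorted_blocks
begin

definition head_vec :: "nat \<Rightarrow> real" where
  "head_vec = restrict_to (T \<union> block 0) h"

definition tail_vec :: "nat \<Rightarrow> real" where
  "tail_vec t = (\<Sum>j\<in>{1..<l}. restrict_to (block j) h t)"

lemma head_plus_tail: "t < n \<Longrightarrow> h t = head_vec t + tail_vec t"
proof -
  assume t: "t < n"
  have T_block: "t \<notin> block j" if "t \<in> T" "j < l" for j
    using block_subset[OF that(2)] that(1) by auto
  show ?thesis
  proof (cases "t \<in> T")
    case True
    then have "tail_vec t = 0"
      unfolding tail_vec_def restrict_to_def using T_block by (intro sum.neutral) auto
    then show ?thesis using True by (simp add: head_vec_def restrict_to_def)
  next
    case False
    then obtain j0 where j0: "j0 < l" "t \<in> block j0" using block_cover t by blast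
    have other: "t \<notin> block j" if "j < l" "j \<noteq> j0" for j
      using block_disjoint[OF that(1) j0(1) that(2)] j0 by auto
    show ?thesis
    proof (cases "j0 = 0")
      case True
      then have "tail_vec t = 0"
        unfolding tail_vec_def restrict_to_def using other by (intro sum.neutral) auto
      then show ?thesis using j0 True by (simp add: head_vec_def restrict_to_def)
    next
      case False
      have "tail_vec t = (\<Sum>j\<in>{1..<l}. if j = j0 then h t else 0)"
        unfolding tail_vec_def restrict_to_def using other j0 by (intro sum.cong) auto
      also have "\<dots> = h t" using j0 False by simp
      finally show ?thesis
        using \<open>t \<notin> T\<close> other[of 0] False l_pos by (simp add: head_vec_def restrict_to_def)
    qed
  qed
qed

lemma head_rip_bound:
  assumes rip: "rip A m n (2 * k) d" and \<eta>: "norm2 m (matvec A n h) \<le> \<eta>"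
  shows "(1 - d) * ((\<Sum>e\<in>T. (h e)\<^sup>2) + energy 0) \<le> (norm2 m (matvec A n tail_vec) + \<eta>)\<^sup>2"
proof -
  have sq: "sqnorm n head_vec = (\<Sum>e\<in>T. (h e)\<^sup>2) + energy 0"
  proof -
    have "sqnorm n head_vec = (\<Sum>e\<in>T \<union> block 0. (h e)\<^sup>2)"
      unfolding head_vec_def using T_subset block_subset[OF l_pos] by (intro sqnorm_restrict_to) auto
    also have "\<dots> = (\<Sum>e\<in>T. (h e)\<^sup>2) + energy 0"
      unfolding energy_def using finite_T block_subset[OF l_pos]
      by (intro sum.union_disjoint) (auto simp: block_def)
    finally show ?thesis .
  qed
  have "sparse (2 * k) n head_vec"
    unfolding head_vec_def using T_subset block_subset[OF l_pos] card_Un_le[of T "block 0"]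
      card_T card_block[OF l_pos] by (intro sparse_restrict_to) auto
  then have "(1 - d) * sqnorm n head_vec \<le> sqnorm m (matvec A n head_vec)"
    using rip unfolding rip_def by blast
  also have "sqnorm m (matvec A n head_vec) \<le> (norm2 m (matvec A n tail_vec) + \<eta>)\<^sup>2"
  proof -
    have "matvec A n h i = matvec A n head_vec i + matvec A n tail_vec i" for i
      using matvec_cong[of n h "\<lambda>t. head_vec t + tail_vec t" A] head_plus_tail
      by (simp add: matvec_add)
    then have "norm2 m (matvec A n head_vec) \<le> norm2 m (matvec A n h) + norm2 m (matvec A n tail_vec)"
      by (intro norm2_le_diff) simp
    then show ?thesis
      unfolding sqnorm_eq_square_norm2 using \<eta> by (intro power_mono) (auto simp: norm2_def sqnorm_nonneg)
  qed
  finally show ?thesis by (simp add: sq)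
qed

lemma tail_rip_bound:
  assumes rip: "rip A m n (2 * k) d" and d: "0 \<le> d"
  shows "(norm2 m (matvec A n tail_vec))\<^sup>2
    \<le> (\<Sum>j\<in>{1..<l}. energy j) + d * (\<Sum>j\<in>{1..<l}. sqrt (energy j))\<^sup>2"
proof -
  define v where "v j = restrict_to (block j) h" for j
  have sq_v: "sqnorm n (v j) = energy j" if "j < l" for j
    unfolding v_def energy_def using block_subset[OF that] by (intro sqnorm_restrict_to) auto
  have "matvec A n tail_vec i = (\<Sum>j\<in>{1..<l}. matvec A n (v j) i)" for i
    unfolding tail_vec_def[abs_def] v_def by (rule matvec_sum)
  then have "matvec A n tail_vec = (\<lambda>i. \<Sum>j\<in>{1..<l}. matvec A n (v j) i)" by (rule ext)
  then have "(norm2 m (matvec A n tail_vec))\<^sup>2 = sqnorm m (\<lambda>i. \<Sum>j\<in>{1..<l}. matvec A n (v j) i)"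
    by (simp add: sqnorm_eq_square_norm2[symmetric])
  also have "\<dots> = (\<Sum>j\<in>{1..<l}. \<Sum>j'\<in>{1..<l}. inner_prod m (matvec A n (v j)) (matvec A n (v j')))"
    by (rule sqnorm_sum)
  also have "\<dots> \<le> d * (\<Sum>j\<in>{1..<l}. sqrt (energy j))\<^sup>2 + (\<Sum>j\<in>{1..<l}. energy j)"
  proof (rule double_sum_le)
    fix j j' assume jj: "j \<in> {1..<l}" "j' \<in> {1..<l}"
    show "inner_prod m (matvec A n (v j)) (matvec A n (v j'))
        \<le> d * sqrt (energy j) * sqrt (energy j') + (if j = j' then energy j else 0)"
    proof (cases "j = j'")
      case True
      have "sparse (2 * k) n (v j)"
        unfolding v_def using block_subset card_block jj by (intro sparse_restrict_to) auto
      then have "sqnorm m (matvec A n (v j)) \<le> (1 + d) * energy j"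
        using rip sq_v[of j] jj unfolding rip_def by auto
      then show ?thesis using True energy_nonneg[of j] by (simp add: inner_prod_self algebra_simps)
    next
      case False
      have "\<bar>inner_prod m (matvec A n (v j)) (matvec A n (v j'))\<bar>
          \<le> d * sqrt (sqnorm n (v j)) * sqrt (sqnorm n (v j'))"
      proof (rule rip_inner_disjoint_le[OF rip d])
        show "block j \<subseteq> {..<n}" "block j' \<subseteq> {..<n}" using block_subset jj by auto
        show "block j \<inter> block j' = {}" using block_disjoint False jj by auto
        show "card (block j) \<le> k" "card (block j') \<le> k" using card_block jj by auto
      qed (auto simp: v_def restrict_to_def)
      then show ?thesis using sq_v jj False by simp
    qed
  qed simp
  finally show ?thesis by simp
qed

lemma robust_null_space_property:
  assumes rip: "rip A m n (2 * k) d" and d: "1/2 \<le> d" "d < 1" and p: "0 < p" "p < 1"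
    and \<eta>: "norm2 m (matvec A n h) \<le> \<eta>"
  shows "(\<Sum>j\<in>T. \<bar>h j\<bar> powr p) \<le> Cp d p * (\<Sum>j\<in>{..<n} - T. \<bar>h j\<bar> powr p)
           + 2 powr (p/2) * real k powr (1 - p/2) * \<eta> powr p / (1 - d) powr (p/2)"
proof -
  define Q where "Q = (\<Sum>j<l. mass p j)"
  define F where "F = ((2 - d) powr (1 - 2/p) * g p + d * tail_const_sq p) / (1 - d)"
  have Q: "0 \<le> Q" "mass p 0 \<le> Q"
    using l_pos member_le_sum[of 0 "{..<l}" "mass p"] by (auto simp: Q_def mass_nonneg sum_nonneg)
  have \<eta>0: "0 \<le> \<eta>" using \<eta> by (smt (verit) norm2_def real_sqrt_ge_zero sqnorm_nonneg)
  have d0: "0 \<le> d" using d by simp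
  have F: "0 \<le> F" using g_nonneg[OF p(1)] tail_const_sq_nonneg[OF p] d by (simp add: F_def)
  have head: "(\<Sum>e\<in>T. (h e)\<^sup>2) \<le> (sqrt (F * (real k powr (1 - 2/p) * Q powr (2/p)))
      + sqrt 2 * \<eta> / sqrt (1 - d))\<^sup>2"
    unfolding F_def
    by (rule head_energy_le[OF p _ d mass_nonneg Q(1) \<eta>0 head_rip_bound[OF rip \<eta>]
          tail_rip_bound[OF rip d0] sum_sqrt_energy_sq_le[OF p, folded Q_def] _ first_block_energy_ge[OF p]])
      (use k_pos d tail_energy_le[OF p] in \<open>auto simp: Q_def\<close>)
  have "(\<Sum>j\<in>T. \<bar>h j\<bar> powr p) \<le> F powr (p/2) * Q
      + 2 powr (p/2) * real k powr (1 - p/2) * \<eta> powr p / (1 - d) powr (p/2)"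
    using head_powr_le[OF p _ Q(1) F \<eta>0 d(2) _ head] k_pos
      sum_abs_powr_le_power_mean[OF finite_T card_T k_pos p(1)] p
    by (simp add: sum_nonneg)
  then show ?thesis
    by (simp add: Cp_eq_tail_const_sq F_def Q_def mass_def sum_complement_eq_sum_blocks)
qed

end

section \<open>The error bound\<close>

lemma sum_split_complement:
  fixes n :: nat and F :: "nat \<Rightarrow> 'a::comm_monoid_add"
  assumes "T \<subseteq> {..<n}"
  shows "(\<Sum>j<n. F j) = (\<Sum>j\<in>T. F j) + (\<Sum>j\<in>{..<n} - T. F j)"
  using sum.subset_diff[OF assms finite_lessThan, of F] by (simp add: add.commute)

lemma cone_constraint:
  fixes x xs :: "nat \<Rightarrow> real"
  assumes p: "0 < p" "p \<le> 1" and T: "T \<subseteq> {..<n}"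
    and min: "pnorm_pow p n xs \<le> pnorm_pow p n x"
  shows "(\<Sum>j\<in>{..<n} - T. \<bar>x j - xs j\<bar> powr p)
    \<le> (\<Sum>j\<in>T. \<bar>x j - xs j\<bar> powr p) + 2 * (\<Sum>j\<in>{..<n} - T. \<bar>x j\<bar> powr p)"
proof -
  have on_T: "\<bar>x j\<bar> powr p - \<bar>x j - xs j\<bar> powr p \<le> \<bar>xs j\<bar> powr p" for j
    using abs_add_powr_le[OF p, of "x j - xs j" "xs j"] by simp
  have off_T: "\<bar>x j - xs j\<bar> powr p - \<bar>x j\<bar> powr p \<le> \<bar>xs j\<bar> powr p" for j
    using abs_add_powr_le[OF p, of "- x j" "xs j"] by (simp add: abs_minus_commute)
  have "(\<Sum>j\<in>T. \<bar>x j\<bar> powr p - \<bar>x j - xs j\<bar> powr p)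
      + (\<Sum>j\<in>{..<n} - T. \<bar>x j - xs j\<bar> powr p - \<bar>x j\<bar> powr p) \<le> pnorm_pow p n xs"
    unfolding pnorm_pow_def sum_split_complement[OF T]
    using on_T off_T by (intro add_mono sum_mono) auto
  also have "\<dots> \<le> (\<Sum>j\<in>T. \<bar>x j\<bar> powr p) + (\<Sum>j\<in>{..<n} - T. \<bar>x j\<bar> powr p)"
    using min unfolding pnorm_pow_def sum_split_complement[OF T] .
  finally show ?thesis by (simp add: sum_subtractf)
qed

lemma le_of_nsp_and_cone:
  fixes a b C D X :: real
  assumes nsp: "a \<le> C * b + D" and cone: "b \<le> a + 2 * X" and C: "0 \<le> C" "C < 1"
  shows "a + b \<le> 2 * (1 + C) / (1 - C) * X + 2 / (1 - C) * D"
proof -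
  have "(1 - C) * b \<le> 2 * X + D" using nsp cone by (simp add: algebra_simps)
  then have b: "b \<le> (2 * X + D) / (1 - C)" using C by (simp add: field_simps)
  have "a + b \<le> (1 + C) * b + D" using nsp by (simp add: algebra_simps)
  also have "\<dots> \<le> (1 + C) * ((2 * X + D) / (1 - C)) + D"
    using b C by (intro add_mono mult_left_mono) auto
  also have "\<dots> = 2 * (1 + C) / (1 - C) * X + 2 / (1 - C) * D"
  proof -
    have ne: "1 - C \<noteq> 0" using C by simp
    have "(1 + C) * ((2 * X + D) / (1 - C)) + D = ((1 + C) * (2 * X + D) + (1 - C) * D) / (1 - C)"
      using ne by (simp add: field_simps)
    also have "(1 + C) * (2 * X + D) + (1 - C) * D = 2 * (1 + C) * X + 2 * D"
      by (simp add: algebra_simps)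
    finally show ?thesis by (simp only: add_divide_distrib times_divide_eq_left)
  qed
  finally show ?thesis .
qed

lemma error_bound_of_rip:
  fixes A :: "nat \<Rightarrow> nat \<Rightarrow> real" and x xs :: "nat \<Rightarrow> real"
  assumes k: "0 < k" and l: "0 < l" and n: "n = (l + 1) * k"
    and rip: "rip A m n (2 * k) d" and d: "1/2 \<le> d" "d < 1" and p: "0 < p" "p < 1"
    and T: "T \<subseteq> {..<n}" "card T = k"
    and \<eta>: "norm2 m (matvec A n (\<lambda>j. x j - xs j)) \<le> \<eta>"
    and min: "pnorm_pow p n xs \<le> pnorm_pow p n x"
    and C: "Cp d p < 1"
  shows "pnorm_pow p n (\<lambda>j. x j - xs j)
    \<le> 2 * (1 + Cp d p) / (1 - Cp d p) * (\<Sum>j\<in>{..<n} - T. \<bar>x j\<bar> powr p)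
      + 2 / (1 - Cp d p) * (2 powr (p/2) * real k powr (1 - p/2) * \<eta> powr p / (1 - d) powr (p/2))"
proof -
  define h where "h j = x j - xs j" for j
  have "card ({..<n} - T) = l * k" using card_Diff_subset[OF finite_subset T(1)] T n by simp
  then obtain \<sigma> where "bij_betw \<sigma> {..<l * k} ({..<n} - T)"
    and "\<forall>i j. i \<le> j \<longrightarrow> j < l * k \<longrightarrow> \<bar>h (\<sigma> j)\<bar> \<le> \<bar>h (\<sigma> i)\<bar>"
    using exists_decreasing_enumeration[of "{..<n} - T" "l * k" h] by auto
  then interpret sorted_blocks n k l T \<sigma> h
    using k l T by unfold_locales auto
  have "(\<Sum>j\<in>T. \<bar>h j\<bar> powr p) + (\<Sum>j\<in>{..<n} - T. \<bar>h j\<bar> powr p)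
    \<le> 2 * (1 + Cp d p) / (1 - Cp d p) * (\<Sum>j\<in>{..<n} - T. \<bar>x j\<bar> powr p)
      + 2 / (1 - Cp d p) * (2 powr (p/2) * real k powr (1 - p/2) * \<eta> powr p / (1 - d) powr (p/2))"
    using robust_null_space_property[OF rip d p] \<eta> cone_constraint[OF _ _ T(1) min] p C
    by (intro le_of_nsp_and_cone) (auto simp: h_def[abs_def] Cp_def)
  then show ?thesis
    unfolding pnorm_pow_def sum_split_complement[OF T(1)] by (simp add: h_def)
qed

lemma residual_le_two_eps:
  assumes y: "\<forall>i<m. y i = matvec A n x i + e i"
    and e: "norm2 m e \<le> \<epsilon>" and xs: "norm2 m (\<lambda>i. y i - matvec A n xs i) \<le> \<epsilon>"
  shows "norm2 m (matvec A n (\<lambda>j. x j - xs j)) \<le> 2 * \<epsilon>"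
proof -
  have "norm2 m (matvec A n (\<lambda>j. x j - xs j)) \<le> norm2 m (\<lambda>i. y i - matvec A n xs i) + norm2 m e"
    using y by (intro norm2_le_diff) (simp add: matvec_diff)
  then show ?thesis using e xs by simp
qed

lemma pnorm_pow_le_of_pnorm_le:
  assumes "0 < p" "pnorm p n u \<le> pnorm p n v"
  shows "pnorm_pow p n u \<le> pnorm_pow p n v"
proof -
  have inv: "(z powr (1/p)) powr p = z" if "0 \<le> z" for z
    using that assms(1) by (simp add: powr_powr)
  have "(pnorm_pow p n u powr (1/p)) powr p \<le> (pnorm_pow p n v powr (1/p)) powr p"
    using assms by (rule_tac powr_mono2) (auto simp: pnorm_def pnorm_pow_def sum_nonneg)
  then show ?thesis by (simp add: inv pnorm_pow_def sum_nonneg)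
qed

lemma sparse_support_in_k_set:
  assumes "sparse k n x" "k \<le> n"
  obtains T where "T \<subseteq> {..<n}" "card T = k" "\<And>j. j \<in> {..<n} - T \<Longrightarrow> x j = 0"
proof -
  have "card {j. j < n \<and> x j \<noteq> 0} \<le> k" using assms(1) by (simp add: sparse_def)
  then obtain T where "{j. j < n \<and> x j \<noteq> 0} \<subseteq> T" "T \<subseteq> {..<n}" "card T = k"
    using exists_subset_between[of "{j. j < n \<and> x j \<noteq> 0}" k "{..<n}"] assms(2) by auto
  then show ?thesis using that by blast
qed

lemma eq_of_pnorm_pow_diff_le_0:
  assumes "pnorm_pow p n (\<lambda>j. x j - xs j) \<le> 0" "j < n"
  shows "xs j = x j"
proof -
  have "(\<Sum>i<n. \<bar>x i - xs i\<bar> powr p) = 0"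
    using assms(1) unfolding pnorm_pow_def by (meson antisym sum_nonneg powr_ge_zero)
  then have "\<bar>x j - xs j\<bar> powr p = 0" using assms(2) by (simp add: sum_nonneg_eq_0_iff)
  then show ?thesis by simp
qed

theorem theorem1:
  fixes k l m n :: nat and A :: "nat \<Rightarrow> nat \<Rightarrow> real"
    and x e y xs :: "nat \<Rightarrow> real" and \<epsilon> p :: real
  assumes "k > 0" "l > 0" "m > 0" and "n = (l + 1) * k"
    and "sqrt 2 / 2 \<le> ric A m n (2 * k)" "ric A m n (2 * k) < 1"
    and "\<epsilon> \<ge> 0" "norm2 m e \<le> \<epsilon>"
    and "\<forall>i<m. y i = matvec A n x i + e i"
    and "0 < p" "p < 1"
    and "norm2 m (\<lambda>i. y i - matvec A n xs i) \<le> \<epsilon>"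
    and "\<forall>\<gamma>. norm2 m (\<lambda>i. y i - matvec A n \<gamma> i) \<le> \<epsilon> \<longrightarrow> pnorm p n xs \<le> pnorm p n \<gamma>"
    and "Cp (ric A m n (2 * k)) p < 1"
  shows "(pnorm_pow p n (\<lambda>j. x j - xs j)
           \<le> 2 * (1 + Cp (ric A m n (2 * k)) p) / (1 - Cp (ric A m n (2 * k)) p)
               * (\<Sum>j\<in>{k..<n}. \<bar>x j\<bar> powr p)
             + 2 powr (3 * p / 2 + 1) / ((1 - ric A m n (2 * k)) powr (p / 2) * (1 - Cp (ric A m n (2 * k)) p))
               * real k powr (1 - p / 2) * \<epsilon> powr p)
         \<and> (\<epsilon> = 0 \<and> sparse k n x \<longrightarrow> (\<forall>j<n. xs j = x j))"
proof -
  define \<delta> where "\<delta> = ric A m n (2 * k)"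
  have k: "0 < k" "k \<le> n" and l: "0 < l" and n: "n = (l + 1) * k" and p: "0 < p" "p < 1"
    using assms by auto
  have "1 \<le> sqrt (2::real)" by simp
  then have \<delta>: "1/2 \<le> \<delta>" "\<delta> < 1"
    using assms(5,6) unfolding \<delta>_def by linarith+
  have "norm2 m (\<lambda>i. y i - matvec A n x i) \<le> \<epsilon>"
    using assms(8,9) by (simp add: norm2_def sqnorm_def)
  then have min: "pnorm_pow p n xs \<le> pnorm_pow p n x"
    using assms(13) p by (intro pnorm_pow_le_of_pnorm_le) auto
  have rip: "rip A m n (2 * k) \<delta>" unfolding \<delta>_def by (rule rip_ric)
  note bound = error_bound_of_rip[OF k(1) l n rip \<delta> p _ _
      residual_le_two_eps[OF assms(9,8,12)] min assms(14)[folded \<delta>_def]]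
  have "2 / (1 - Cp \<delta> p) * (2 powr (p/2) * real k powr (1 - p/2) * (2 * \<epsilon>) powr p / (1 - \<delta>) powr (p/2))
      = 2 powr (3 * p / 2 + 1) / ((1 - \<delta>) powr (p / 2) * (1 - Cp \<delta> p)) * real k powr (1 - p / 2) * \<epsilon> powr p"
    using assms(7) powr_add[of 2 "p/2 + p" 1] powr_add[of 2 "p/2" p]
    by (simp add: powr_mult field_simps)
  moreover have "{..<n} - {..<k} = {k..<n}" by auto
  ultimately have error: "pnorm_pow p n (\<lambda>j. x j - xs j) \<le> 2 * (1 + Cp \<delta> p) / (1 - Cp \<delta> p)
      * (\<Sum>j\<in>{k..<n}. \<bar>x j\<bar> powr p) + 2 powr (3 * p / 2 + 1) / ((1 - \<delta>) powr (p / 2)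
      * (1 - Cp \<delta> p)) * real k powr (1 - p / 2) * \<epsilon> powr p"
    using bound[of "{..<k}"] k by simp
  have "xs j = x j" if \<epsilon>0: "\<epsilon> = 0" and sp: "sparse k n x" and j: "j < n" for j
  proof -
    obtain T where T: "T \<subseteq> {..<n}" "card T = k" "\<And>j. j \<in> {..<n} - T \<Longrightarrow> x j = 0"
      using sparse_support_in_k_set[OF sp k(2)] by blast
    show ?thesis
      using bound[OF T(1,2)] T(3) p \<epsilon>0 j by (intro eq_of_pnorm_pow_diff_le_0) simp_all
  qed
  then show ?thesis using error by (auto simp: \<delta>_def)
qed

end
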